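(* Let $k$ be an unramified non-archimedean local field of residue characteristic $2$ (so $e=1$ and we take $\varpi=2$). Let $B(x)=x_1^2-\Delta x_2^2$ on $k^2$, where $\Delta=1+4v$ is a unit with quadratic defect $4\mathfrak o$ and $v$ is a unit. Let $z=q^{-\beta}$, $w=zq^{-1}$, and $t\in\mathfrak o\setminus\{0\}$ with $|t|=q^{-T}$. Then \[ X^B(\beta;1)=\frac{|2|}{1-w} \qquad\text{and}\qquad X^B(\beta;4t^2)=|2|\,\frac{1+z+w^{2T}(zw+w^3)}{1-w^2}. \]
   Context: $k$ has ring of integers $\mathfrak o$, residue field of cardinality $q$, absolute value normalized by $|2|=q^{-1}$. On $\mathfrak o^n$ use the additive Haar measure of total mass $1$. For a quadratic form $B$ on $k^n$, $\rho\in\mathfrak o$ and integer $\ell\ge0$: $X_\ell^B(\rho)=\operatorname{meas}\{x\in\mathfrak o^n: B(x)-\rho\in 2^{\ell+1}\mathfrak o\}$ and $X^B(\beta;\rho)=\sum_{\ell\ge0}z^\ell X_\ell^B(\rho)$ with $z=q^{-\beta}$. The quadratic defect of $\rho\in k$ is the intersection of all ideals $b\mathfrak o$ over those $b\in k$ for which $\rho-b$ is a square in $k$. *)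

theory Defs
  imports "HOL-Analysis.Analysis"
begin

text \<open>A non-archimedean field k is modelled by a field type 'k together with a
  normalized discrete valuation val : k - {0} -> Z (val 0 is irrelevant).
  The absolute value is |x| = q^(-val x).\<close>

definition intg :: "('k::field \<Rightarrow> int) \<Rightarrow> 'k set" where
  "intg val = {x. x = 0 \<or> 0 \<le> val x}"

definition ideal_of :: "('k::field \<Rightarrow> int) \<Rightarrow> 'k \<Rightarrow> 'k set" where
  "ideal_of val b = (\<lambda>c. b * c) ` intg val"

definition cls :: "('k::field \<Rightarrow> int) \<Rightarrow> nat \<Rightarrow> 'k \<Rightarrow> 'k set" where
  "cls val m x = {y \<in> intg val. x - y \<in> ideal_of val (2 ^ m)}"

text \<open>k is an unramified non-archimedean local field of residue characteristic 2:
  val is a discrete valuation with 2 as uniformizer (val 2 = 1, so val is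
  normalized and e = 1), k is complete, and the residue field o/2o is finite
  of cardinality q.\<close>
definition unram2_local_field :: "('k::field \<Rightarrow> int) \<Rightarrow> nat \<Rightarrow> bool" where
  "unram2_local_field val q \<longleftrightarrow>
     (\<forall>x y. x \<noteq> 0 \<longrightarrow> y \<noteq> 0 \<longrightarrow> val (x * y) = val x + val y) \<and>
     (\<forall>x y. x \<noteq> 0 \<longrightarrow> y \<noteq> 0 \<longrightarrow> x + y \<noteq> 0 \<longrightarrow> min (val x) (val y) \<le> val (x + y)) \<and>
     (2::'k) \<noteq> 0 \<and> val 2 = 1 \<and>
     (\<forall>s :: nat \<Rightarrow> 'k.
        (\<forall>N::int. \<exists>M. \<forall>m\<ge>M. \<forall>n\<ge>M. s m = s n \<or> N \<le> val (s m - s n)) \<longrightarrow>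
        (\<exists>L. \<forall>N::int. \<exists>M. \<forall>n\<ge>M. s n = L \<or> N \<le> val (s n - L))) \<and>
     finite (cls val 1 ` intg val) \<and> card (cls val 1 ` intg val) = q"

definition quad_defect :: "('k::field \<Rightarrow> int) \<Rightarrow> 'k \<Rightarrow> 'k set" where
  "quad_defect val \<rho> = \<Inter> {ideal_of val b | b. \<exists>y. \<rho> - b = y ^ 2}"

text \<open>X_l^B(rho) = meas{x in o^2 : B(x) - rho in 2^(l+1) o}.  This set is a union of
  cosets of (2^(l+1) o)^2, each of Haar measure q^(-2(l+1)) (total mass of o^2 is 1),
  so its measure is (number of such cosets) / q^(2(l+1)).\<close>
definition Xl :: "('k::field \<Rightarrow> int) \<Rightarrow> nat \<Rightarrow> ('k \<Rightarrow> 'k \<Rightarrow> 'k) \<Rightarrow> 'k \<Rightarrow> nat \<Rightarrow> real" where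
  "Xl val q B \<rho> l =
     real (card {(cls val (l+1) x1, cls val (l+1) x2) | x1 x2.
                  x1 \<in> intg val \<and> x2 \<in> intg val \<and> B x1 x2 - \<rho> \<in> ideal_of val (2 ^ (l+1))})
     / real q ^ (2 * (l + 1))"

end

theory Submission
  imports Defs
begin

(* Substituting x1 = a + c, x2 = c turns B into G(a, c) = a^2 + 2ac - 4uc^2. The hypothesis on the
   quadratic defect of 1 + 4u says exactly that X^2 + X - u has no root modulo 2, i.e. that
   N(a, b) = a^2 + ab - ub^2, the norm form of the unramified quadratic extension, is anisotropic
   modulo 2. We count the solutions of G = rho modulo 2^n on a fixed residue system.

   Since G = a^2 mod 2 and squaring is bijective on the residue field, a unit rho has q^n solutions
   modulo 2^n by Hensel lifting in c; this gives X_l(1) = q^-(l+1). A solution of G = 4 rho has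
   a = 2y, and G(2y, c) = 4 N(y, c) reduces the count modulo 2^(n+2) to that of N modulo 2^n;
   conversely N(a, c) = rho with rho even forces c = 2c', and N(a, 2c') = G(a, c'). Hence the
   count for 4 rho is q^2 times the count for rho when rho is even. For a unit s, N = s has q + 1
   solutions modulo 2 which lift smoothly, so 4^(T+1) s has q^n (q + 1) solutions once
   n > 2T + 2, while below that level 4t^2 = 0 and the count for 0 is q^n or q^(n+1) according to
   the parity of n. Summing the geometric series gives both formulas. *)

locale dyadic_valuation =
  fixes val :: "'k::field \<Rightarrow> int" and q :: nat
  assumes val_mult: "\<And>x y. x \<noteq> 0 \<Longrightarrow> y \<noteq> 0 \<Longrightarrow> val (x * y) = val x + val y"
    and val_add: "\<And>x y. x \<noteq> 0 \<Longrightarrow> y \<noteq> 0 \<Longrightarrow> x + y \<noteq> 0 \<Longrightarrow> min (val x) (val y) \<le> val (x + y)"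
    and two_neq_zero: "(2::'k) \<noteq> 0"
    and val_two: "val 2 = 1"
    and finite_residues: "finite (cls val 1 ` intg val)"
    and card_residues: "card (cls val 1 ` intg val) = q"
begin

abbreviation \<O> :: "'k set" where "\<O> \<equiv> intg val"

definition dvd2 :: "nat \<Rightarrow> 'k \<Rightarrow> bool" where
  "dvd2 n x \<longleftrightarrow> x \<in> ideal_of val (2 ^ n)"

lemma val_one: "val 1 = 0"
  using val_mult[of 1 1] by simp

lemma val_inverse: "x \<noteq> 0 \<Longrightarrow> val (inverse x) = - val x"
  using val_mult[of x "inverse x"] val_one by simp

lemma val_minus: "val (- x) = val x"
proof (cases "x = 0")
  case False
  have "val (-1) = 0"
    using val_mult[of "-1" "-1"] val_one by simp
  then show ?thesis
    using val_mult[of "-1" x] False by simp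
qed simp

lemma val_two_power: "val ((2::'k) ^ n) = int n"
  by (induction n) (simp_all add: val_one val_mult two_neq_zero val_two)

lemma dvd2_iff_val: "dvd2 n x \<longleftrightarrow> x = 0 \<or> int n \<le> val x"
proof
  assume "dvd2 n x"
  then obtain c where c: "c \<in> \<O>" "x = 2 ^ n * c"
    unfolding dvd2_def ideal_of_def by auto
  then show "x = 0 \<or> int n \<le> val x"
    using val_mult[of "2 ^ n" c] two_neq_zero by (cases "c = 0") (auto simp: val_two_power intg_def)
next
  assume x: "x = 0 \<or> int n \<le> val x"
  have "x / 2 ^ n \<in> \<O>"
    using x val_mult[of x "inverse (2 ^ n)"] val_inverse[of "2 ^ n"] two_neq_zero
    by (cases "x = 0") (auto simp: intg_def val_two_power divide_inverse)
  moreover have "x = 2 ^ n * (x / 2 ^ n)"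
    using two_neq_zero by simp
  ultimately show "dvd2 n x"
    unfolding dvd2_def ideal_of_def by blast
qed

lemma integral_iff_dvd2_0: "x \<in> \<O> \<longleftrightarrow> dvd2 0 x"
  by (simp add: dvd2_iff_val intg_def)

lemma dvd2_0 [simp]: "dvd2 n 0"
  by (simp add: dvd2_iff_val)

lemma dvd2_add: "dvd2 n x \<Longrightarrow> dvd2 n y \<Longrightarrow> dvd2 n (x + y)"
  unfolding dvd2_iff_val using val_add[of x y] by fastforce

lemma dvd2_minus_iff [simp]: "dvd2 n (- x) \<longleftrightarrow> dvd2 n x"
  by (simp add: dvd2_iff_val val_minus)

lemma dvd2_diff: "dvd2 n x \<Longrightarrow> dvd2 n y \<Longrightarrow> dvd2 n (x - y)"
  using dvd2_add[of n x "- y"] by simp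

lemma dvd2_diff_commute: "dvd2 n (x - y) \<longleftrightarrow> dvd2 n (y - x)"
  using dvd2_minus_iff[of n "x - y"] by simp

lemma dvd2_diff_trans: "dvd2 n (x - y) \<Longrightarrow> dvd2 n (y - z) \<Longrightarrow> dvd2 n (x - z)"
  using dvd2_add[of n "x - y" "y - z"] by simp

lemma dvd2_add_left_iff: "dvd2 n d \<Longrightarrow> dvd2 n (x + d) \<longleftrightarrow> dvd2 n x"
  using dvd2_add[of n x d] dvd2_diff[of n "x + d" d] by auto

lemma dvd2_diff_cong: "dvd2 n (x - y) \<Longrightarrow> dvd2 n (x - z) \<longleftrightarrow> dvd2 n (y - z)"
  using dvd2_add_left_iff[of n "x - y" "y - z"] by simp

lemma dvd2_mult: "dvd2 m x \<Longrightarrow> dvd2 n y \<Longrightarrow> dvd2 (m + n) (x * y)"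
  unfolding dvd2_iff_val by (cases "x = 0"; cases "y = 0") (auto simp: val_mult)

lemma dvd2_mono: "dvd2 m x \<Longrightarrow> n \<le> m \<Longrightarrow> dvd2 n x"
  unfolding dvd2_iff_val by auto

lemma dvd2_mult_integral: "dvd2 n x \<Longrightarrow> y \<in> \<O> \<Longrightarrow> dvd2 n (x * y)"
  using dvd2_mult[of n x 0 y] by (simp add: integral_iff_dvd2_0)

lemma dvd2_two_power_mult_iff: "dvd2 (n + k) (2 ^ k * x) \<longleftrightarrow> dvd2 n x"
  using val_mult[of "2 ^ k" x] two_neq_zero by (cases "x = 0") (auto simp: dvd2_iff_val val_two_power)

lemma dvd2_two_power_mult: "x \<in> \<O> \<Longrightarrow> dvd2 n (2 ^ n * x)"
  using dvd2_two_power_mult_iff[of 0 n x] by (simp add: integral_iff_dvd2_0)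

lemma dvd2_Suc_two_mult_iff: "dvd2 (Suc n) (2 * x) \<longleftrightarrow> dvd2 n x"
  using dvd2_two_power_mult_iff[of n 1 x] by simp

lemma dvd2_four_mult_iff: "dvd2 (n + 2) (4 * x) \<longleftrightarrow> dvd2 n x"
  using dvd2_two_power_mult_iff[of n 2 x] by simp

lemma dvd2_two_mult: "x \<in> \<O> \<Longrightarrow> dvd2 1 (2 * x)"
  using dvd2_two_power_mult[of x 1] by simp

lemma not_dvd2_Suc_add_two_power_mult:
  assumes "\<not> dvd2 k x" "y \<in> \<O>"
  shows "\<not> dvd2 (Suc k) (x + 2 ^ k * y)"
proof
  assume "dvd2 (Suc k) (x + 2 ^ k * y)"
  then have "dvd2 k (x + 2 ^ k * y)"
    by (rule dvd2_mono) simp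
  then show False
    using assms dvd2_add_left_iff dvd2_two_power_mult by blast
qed

lemma dvd2_Suc_two_power_mult_add_iff: "dvd2 1 d \<Longrightarrow> dvd2 (Suc k) (2 ^ k * (y + d)) \<longleftrightarrow> dvd2 1 y"
  using dvd2_two_power_mult_iff[of 1 k "y + d"] dvd2_add_left_iff[of 1 d y] by simp

lemma dvd2_one_square_iff: "dvd2 1 (x * x) \<longleftrightarrow> dvd2 1 x"
  unfolding dvd2_iff_val by (cases "x = 0") (auto simp: val_mult)

lemma not_dvd2_one: "\<not> dvd2 1 (1::'k)"
  by (simp add: dvd2_iff_val val_one)

lemma dvd2D: "dvd2 n x \<Longrightarrow> \<exists>c\<in>\<O>. x = 2 ^ n * c"
  unfolding dvd2_def ideal_of_def by auto

lemma integral_add: "x \<in> \<O> \<Longrightarrow> y \<in> \<O> \<Longrightarrow> x + y \<in> \<O>"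
  by (simp add: integral_iff_dvd2_0 dvd2_add)

lemma integral_minus: "x \<in> \<O> \<Longrightarrow> - x \<in> \<O>"
  by (simp add: integral_iff_dvd2_0)

lemma integral_diff: "x \<in> \<O> \<Longrightarrow> y \<in> \<O> \<Longrightarrow> x - y \<in> \<O>"
  by (simp add: integral_iff_dvd2_0 dvd2_diff)

lemma integral_mult: "x \<in> \<O> \<Longrightarrow> y \<in> \<O> \<Longrightarrow> x * y \<in> \<O>"
  using dvd2_mult[of 0 x 0 y] by (simp add: integral_iff_dvd2_0)

lemma integral_one: "1 \<in> \<O>" and integral_zero: "0 \<in> \<O>"
  by (simp_all add: intg_def val_one)

lemma integral_numeral: "numeral m \<in> \<O>"
proof -
  have "of_nat n \<in> \<O>" for n
    by (induction n) (auto simp: integral_zero integral_one intro: integral_add)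
  then show ?thesis
    using of_nat_numeral by metis
qed

lemma integral_power: "x \<in> \<O> \<Longrightarrow> x ^ n \<in> \<O>"
  by (induction n) (simp_all add: integral_one integral_mult)

lemmas integral_intros =
  integral_add integral_minus integral_diff integral_mult integral_numeral integral_one integral_power

lemma dvd2_integral: "dvd2 n x \<Longrightarrow> x \<in> \<O>"
  by (simp add: integral_iff_dvd2_0 dvd2_mono)

lemma unit_inverse_integral: "x \<in> \<O> \<Longrightarrow> \<not> dvd2 1 x \<Longrightarrow> x \<noteq> 0 \<and> inverse x \<in> \<O>"
  unfolding integral_iff_dvd2_0 dvd2_iff_val by (auto simp: val_inverse)

lemma dvd2_unit_mult_iff: "g \<in> \<O> \<Longrightarrow> \<not> dvd2 1 g \<Longrightarrow> dvd2 n (g * x) \<longleftrightarrow> dvd2 n x"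
  unfolding integral_iff_dvd2_0 dvd2_iff_val by (cases "x = 0") (auto simp: val_mult)

lemma mem_cls_iff: "y \<in> cls val m x \<longleftrightarrow> y \<in> \<O> \<and> dvd2 m (x - y)"
  by (simp add: cls_def dvd2_def)

lemma cls_eq_iff: "x \<in> \<O> \<Longrightarrow> y \<in> \<O> \<Longrightarrow> cls val m x = cls val m y \<longleftrightarrow> dvd2 m (x - y)"
proof
  assume "x \<in> \<O>" "cls val m x = cls val m y"
  moreover have "x \<in> cls val m x"
    using \<open>x \<in> \<O>\<close> by (simp add: mem_cls_iff)
  ultimately have "x \<in> cls val m y"
    by simp
  then have "dvd2 m (y - x)"
    by (simp add: mem_cls_iff)
  then show "dvd2 m (x - y)"
    using dvd2_diff_commute by blast
qed (auto simp: mem_cls_iff intro: dvd2_diff_cong[THEN iffD1] dvd2_diff_cong[THEN iffD2])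

section \<open>Residue systems modulo powers of 2\<close>

text \<open>The digits are one fixed representative of each residue class modulo 2, chosen so
  that 0 represents the class of 0; the elements of \<open>reps n\<close> are the 2-adic expansions
  with n such digits.\<close>

definition class_rep :: "'k set \<Rightarrow> 'k" where
  "class_rep C = (if 0 \<in> C then 0 else SOME x. x \<in> C)"

definition digits :: "'k set" where
  "digits = class_rep ` cls val 1 ` \<O>"

primrec reps :: "nat \<Rightarrow> 'k set" where
  "reps 0 = {0}"
| "reps (Suc n) = (\<lambda>(r, y). r + 2 * y) ` (digits \<times> reps n)"

declare reps.simps(2) [simp del]

lemma class_rep_in_cls:
  assumes "x \<in> \<O>"
  shows "class_rep (cls val m x) \<in> cls val m x"
proof -
  have "x \<in> cls val m x"
    using assms by (simp add: mem_cls_iff)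
  then have "(SOME y. y \<in> cls val m x) \<in> cls val m x"
    by (rule someI)
  then show ?thesis
    by (simp add: class_rep_def)
qed

lemma digits_integral: "digits \<subseteq> \<O>"
  using class_rep_in_cls integral_zero by (auto simp: digits_def mem_cls_iff)

lemma zero_in_digits: "0 \<in> digits"
proof -
  have "class_rep (cls val 1 0) = 0"
    by (simp add: class_rep_def mem_cls_iff integral_zero)
  then show ?thesis
    unfolding digits_def using integral_zero by (metis image_eqI)
qed

lemma finite_digits: "finite digits"
  using finite_residues by (simp add: digits_def)

lemma digits_exists: "x \<in> \<O> \<Longrightarrow> \<exists>r\<in>digits. dvd2 1 (x - r)"
  using class_rep_in_cls by (force simp: digits_def mem_cls_iff)

lemma digits_unique:
  assumes "r \<in> digits" "r' \<in> digits" "dvd2 1 (r - r')"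
  shows "r = r'"
proof -
  obtain x x' where x: "x \<in> \<O>" "x' \<in> \<O>" "r = class_rep (cls val 1 x)" "r' = class_rep (cls val 1 x')"
    using assms(1,2) by (auto simp: digits_def)
  then have "dvd2 1 (x - r)" "dvd2 1 (r' - x')"
    using class_rep_in_cls[of x 1] class_rep_in_cls[of x' 1] by (auto simp: mem_cls_iff dvd2_diff_commute)
  then have "dvd2 1 (x - x')"
    using assms(3) dvd2_diff_trans by blast
  then have "cls val 1 x = cls val 1 x'"
    using cls_eq_iff x by blast
  then show ?thesis
    using x by simp
qed

lemma card_digits: "card digits = q"
proof -
  have "inj_on class_rep (cls val 1 ` \<O>)"
  proof (rule inj_onI, clarify)
    fix x x' assume x: "x \<in> \<O>" "x' \<in> \<O>" "class_rep (cls val 1 x) = class_rep (cls val 1 x')"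
    then have "dvd2 1 (x - class_rep (cls val 1 x))" "dvd2 1 (class_rep (cls val 1 x) - x')"
      using class_rep_in_cls[of x 1] class_rep_in_cls[of x' 1] by (simp_all add: mem_cls_iff dvd2_diff_commute)
    then show "cls val 1 x = cls val 1 x'"
      using x cls_eq_iff dvd2_diff_trans by blast
  qed
  then show ?thesis
    unfolding digits_def using card_image card_residues by fastforce
qed

lemma digit_dvd2_one: "r \<in> digits \<Longrightarrow> dvd2 1 r \<Longrightarrow> r = 0"
  using digits_unique[of r 0] zero_in_digits by simp

lemma reps_integral: "reps n \<subseteq> \<O>"
  by (induction n) (use digits_integral integral_zero in \<open>auto simp: reps.simps(2) intro!: integral_intros\<close>)

lemma finite_reps: "finite (reps n)"
  by (induction n) (simp_all add: finite_digits reps.simps(2))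

lemma reps_one: "reps 1 = digits"
  by (force simp: reps.simps(2))

lemma reps_exists: "x \<in> \<O> \<Longrightarrow> \<exists>y\<in>reps n. dvd2 n (x - y)"
proof (induction n arbitrary: x)
  case (Suc n)
  obtain r where r: "r \<in> digits" "dvd2 1 (x - r)"
    using digits_exists Suc.prems by blast
  obtain c where c: "c \<in> \<O>" "x - r = 2 * c"
    using dvd2D[OF r(2)] by auto
  obtain y where y: "y \<in> reps n" "dvd2 n (c - y)"
    using Suc.IH c(1) by blast
  have eq: "x - (r + 2 * y) = 2 * (c - y)"
    using c(2) by (simp add: algebra_simps)
  have "dvd2 (Suc n) (x - (r + 2 * y))"
    unfolding eq dvd2_Suc_two_mult_iff by (rule y(2))
  moreover have "r + 2 * y \<in> reps (Suc n)"
    using r y by (force simp: reps.simps(2))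
  ultimately show ?case by blast
qed (simp add: integral_iff_dvd2_0)

lemma reps_Suc_unique:
  assumes "r \<in> digits" "r' \<in> digits" "y \<in> \<O>" "y' \<in> \<O>" "dvd2 1 (r + 2 * y - (r' + 2 * y'))"
  shows "r = r'"
proof -
  have "dvd2 1 (r + 2 * y - (r' + 2 * y') - 2 * (y - y'))"
    using assms(5) dvd2_two_mult[OF integral_diff[OF assms(3,4)]] by (rule dvd2_diff)
  moreover have "r + 2 * y - (r' + 2 * y') - 2 * (y - y') = r - r'"
    by (simp add: algebra_simps)
  ultimately show ?thesis
    using assms digits_unique by simp
qed

lemma reps_unique: "y \<in> reps n \<Longrightarrow> y' \<in> reps n \<Longrightarrow> dvd2 n (y - y') \<Longrightarrow> y = y'"
proof (induction n arbitrary: y y')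
  case (Suc n)
  obtain r z r' z' where rz: "r \<in> digits" "z \<in> reps n" "y = r + 2 * z"
    and rz': "r' \<in> digits" "z' \<in> reps n" "y' = r' + 2 * z'"
    using Suc.prems by (auto simp: reps.simps(2))
  have "dvd2 1 (y - y')"
    using dvd2_mono[OF Suc.prems(3)] by simp
  then have "r = r'"
    using reps_Suc_unique[OF rz(1) rz'(1)] rz(2,3) rz'(2,3) reps_integral by blast
  then have "dvd2 (Suc n) (2 * (z - z'))"
    using Suc.prems(3) rz rz' by (simp add: algebra_simps)
  then have "z = z'"
    using Suc.IH rz rz' dvd2_Suc_two_mult_iff by blast
  then show ?case
    using rz rz' \<open>r = r'\<close> by simp
qed simp

lemma inj_on_reps_Suc: "inj_on (\<lambda>(r, y). r + 2 * y) (digits \<times> reps n)"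
proof (rule inj_onI, clarsimp)
  fix r y r' y'
  assume a: "r \<in> digits" "y \<in> reps n" "r' \<in> digits" "y' \<in> reps n" "r + 2 * y = r' + 2 * y'"
  moreover have "dvd2 1 (r + 2 * y - (r' + 2 * y'))"
    using a(5) by simp
  ultimately have "r = r'"
    using reps_Suc_unique[OF a(1,3)] reps_integral by blast
  then show "r = r' \<and> y = y'"
    using a(5) two_neq_zero by simp
qed

lemma reps_Suc_high: "reps (Suc n) = (\<lambda>(y, r). y + 2 ^ n * r) ` (reps n \<times> digits)"
proof (induction n)
  case (Suc n)
  show ?case
  proof (intro equalityI subsetI)
    fix x assume "x \<in> reps (Suc (Suc n))"
    then obtain r z where rz: "r \<in> digits" "z \<in> reps (Suc n)" "x = r + 2 * z"
      by (auto simp: reps.simps(2))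
    then obtain y r' where yr: "y \<in> reps n" "r' \<in> digits" "z = y + 2 ^ n * r'"
      using Suc.IH by auto
    have "r + 2 * y \<in> reps (Suc n)" "x = (r + 2 * y) + 2 ^ Suc n * r'"
      using rz yr by (auto simp: reps.simps(2) algebra_simps)
    then show "x \<in> (\<lambda>(y, r). y + 2 ^ Suc n * r) ` (reps (Suc n) \<times> digits)"
      using yr(2) by (auto intro!: image_eqI[where x = "(r + 2 * y, r')"])
  next
    fix x assume "x \<in> (\<lambda>(y, r). y + 2 ^ Suc n * r) ` (reps (Suc n) \<times> digits)"
    then obtain z r' where zr: "z \<in> reps (Suc n)" "r' \<in> digits" "x = z + 2 ^ Suc n * r'"
      by auto
    then obtain r y where ry: "r \<in> digits" "y \<in> reps n" "z = r + 2 * y"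
      by (auto simp: reps.simps(2))
    have "y + 2 ^ n * r' \<in> reps (Suc n)" "x = r + 2 * (y + 2 ^ n * r')"
      using Suc.IH zr ry by (auto simp: algebra_simps)
    then show "x \<in> reps (Suc (Suc n))"
      unfolding reps.simps(2)[of "Suc n"] using ry(1) by (intro image_eqI[where x = "(r, y + 2 ^ n * r')"]) auto
  qed
qed (force simp: reps.simps(2))

lemma inj_on_reps_Suc_high: "inj_on (\<lambda>(y, r). y + 2 ^ n * r) (reps n \<times> digits)"
proof (rule inj_onI, clarsimp)
  fix y r y' r'
  assume a: "y \<in> reps n" "r \<in> digits" "y' \<in> reps n" "r' \<in> digits" "y + 2 ^ n * r = y' + 2 ^ n * r'"
  have "y - y' = 2 ^ n * (r' - r)"
    using a(5) by (simp add: algebra_simps)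
  moreover have "r' - r \<in> \<O>"
    using a(2,4) digits_integral by (blast intro: integral_diff)
  ultimately have "dvd2 n (y - y')"
    using dvd2_two_power_mult by simp
  then have "y = y'"
    using a(1,3) reps_unique by blast
  then show "y = y' \<and> r = r'"
    using a(5) two_neq_zero by simp
qed

lemma sum_reps_Suc_low: "(\<Sum>x\<in>reps (Suc n). F x) = (\<Sum>r\<in>digits. \<Sum>y\<in>reps n. F (r + 2 * y))"
  using sum.reindex[OF inj_on_reps_Suc, of F] by (simp add: reps.simps(2) sum.cartesian_product comp_def split_def)

lemma sum_reps_Suc: "(\<Sum>x\<in>reps (Suc n). F x) = (\<Sum>y\<in>reps n. \<Sum>r\<in>digits. F (y + 2 ^ n * r))"
  using sum.reindex[OF inj_on_reps_Suc_high, of F]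
  by (simp only: reps_Suc_high) (simp add: sum.cartesian_product comp_def split_def)

definition invariant_mod :: "nat \<Rightarrow> ('k \<Rightarrow> 'b) \<Rightarrow> bool" where
  "invariant_mod n F \<longleftrightarrow> (\<forall>x\<in>\<O>. \<forall>y\<in>\<O>. dvd2 n (x - y) \<longrightarrow> F x = F y)"

lemma invariant_mod_mono: "invariant_mod m F \<Longrightarrow> m \<le> n \<Longrightarrow> invariant_mod n F"
  unfolding invariant_mod_def using dvd2_mono by blast

lemma sum_reps_Suc_invariant_mod:
  fixes F :: "'k \<Rightarrow> nat"
  assumes "invariant_mod n F"
  shows "(\<Sum>x\<in>reps (Suc n). F x) = q * (\<Sum>x\<in>reps n. F x)"
proof -
  have "F (y + 2 ^ n * r) = F y" if "y \<in> reps n" "r \<in> digits" for y r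
  proof -
    have "y \<in> \<O>" "r \<in> \<O>"
      using that reps_integral digits_integral by auto
    moreover have "dvd2 n ((y + 2 ^ n * r) - y)"
      using dvd2_two_power_mult[OF \<open>r \<in> \<O>\<close>] by simp
    ultimately show ?thesis
      using assms unfolding invariant_mod_def by (blast intro: integral_intros)
  qed
  then show ?thesis
    by (simp add: sum_reps_Suc card_digits sum_distrib_left)
qed

definition rep :: "nat \<Rightarrow> 'k \<Rightarrow> 'k" where
  "rep n x = (SOME y. y \<in> reps n \<and> dvd2 n (x - y))"

lemma rep_spec: "x \<in> \<O> \<Longrightarrow> rep n x \<in> reps n \<and> dvd2 n (x - rep n x)"
  unfolding rep_def using reps_exists[of x n] by (metis (mono_tags, lifting) someI)

lemma sum_reps_permute:
  assumes h: "\<And>x. x \<in> reps n \<Longrightarrow> h x \<in> \<O>"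
    and h_inj: "\<And>x y. x \<in> reps n \<Longrightarrow> y \<in> reps n \<Longrightarrow> dvd2 n (h x - h y) \<Longrightarrow> x = y"
    and F: "invariant_mod n F"
  shows "(\<Sum>x\<in>reps n. F (h x)) = (\<Sum>x\<in>reps n. F x)"
proof -
  let ?f = "\<lambda>x. rep n (h x)"
  have f: "?f x \<in> reps n" "dvd2 n (h x - ?f x)" if "x \<in> reps n" for x
    using rep_spec[OF h[OF that]] by auto
  have "inj_on ?f (reps n)"
  proof (rule inj_onI)
    fix x y assume xy: "x \<in> reps n" "y \<in> reps n" "?f x = ?f y"
    have "dvd2 n (h x - ?f y)" "dvd2 n (h y - ?f y)"
      using f(2)[OF xy(1)] f(2)[OF xy(2)] xy(3) by simp_all
    then have "dvd2 n (h x - ?f y)" "dvd2 n (?f y - h y)"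
      using dvd2_diff_commute by blast+
    then show "x = y"
      using h_inj[OF xy(1,2)] dvd2_diff_trans by blast
  qed
  moreover have "?f ` reps n \<subseteq> reps n"
    using f by blast
  ultimately have "?f ` reps n = reps n"
    using endo_inj_surj finite_reps by blast
  moreover have "F (h x) = F (?f x)" if "x \<in> reps n" for x
    using F f[OF that] h[OF that] reps_integral unfolding invariant_mod_def by blast
  ultimately show ?thesis
    using sum.reindex[of ?f "reps n" F] \<open>inj_on ?f (reps n)\<close> by simp
qed

lemma sum_reps_dvd2_diff: "c \<in> \<O> \<Longrightarrow> (\<Sum>x\<in>reps n. of_bool (dvd2 n (x - c))) = (1::nat)"
proof -
  assume c: "c \<in> \<O>"
  have "x = rep n c" if "x \<in> reps n" "dvd2 n (x - c)" for x
    using rep_spec[OF c] reps_unique that dvd2_diff_trans by blast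
  then have "reps n \<inter> {x. dvd2 n (x - c)} = {rep n c}"
    using rep_spec[OF c] dvd2_diff_commute by blast
  then show ?thesis
    using finite_reps by simp
qed

lemma sum_digits_linear:
  assumes "e \<in> \<O>" "g \<in> \<O>" "\<not> dvd2 1 g"
  shows "(\<Sum>r\<in>digits. of_bool (dvd2 1 (e + g * r))) = (1::nat)"
proof -
  have g: "g \<noteq> 0" "inverse g \<in> \<O>"
    using unit_inverse_integral assms by auto
  have "e + g * r = g * (r - (- e * inverse g))" for r
    using g by (simp add: algebra_simps)
  then have "dvd2 1 (e + g * r) \<longleftrightarrow> dvd2 1 (r - (- e * inverse g))" for r
    using dvd2_unit_mult_iff[OF assms(2,3)] by simp
  then have "(\<Sum>r\<in>digits. of_bool (dvd2 1 (e + g * r))) = (\<Sum>r\<in>digits. of_bool (dvd2 1 (r - (- e * inverse g))) :: nat)"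
    by (intro sum.cong refl) (simp only:)
  also have "\<dots> = 1"
    using sum_reps_dvd2_diff[of "- e * inverse g" 1, unfolded reps_one] assms g
    by (simp only: integral_intros)
  finally show ?thesis .
qed

lemma sum_digits_unit_scale:
  fixes F :: "'k \<Rightarrow> 'b::comm_monoid_add"
  assumes "b \<in> \<O>" "\<not> dvd2 1 b" "invariant_mod 1 F"
  shows "(\<Sum>x\<in>digits. F (x * b)) = (\<Sum>x\<in>digits. F x)"
proof -
  have "dvd2 1 (x * b - y * b) \<longleftrightarrow> dvd2 1 (x - y)" for x y
    using dvd2_unit_mult_iff[OF assms(1,2), of 1 "x - y"] by (simp add: algebra_simps)
  then have inj: "x = y" if "x \<in> digits" "y \<in> digits" "dvd2 1 (x * b - y * b)" for x y
    using that digits_unique by blast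
  have integral: "x * b \<in> \<O>" if "x \<in> digits" for x
    using that digits_integral assms(1) by (blast intro: integral_mult)
  show ?thesis
    by (rule sum_reps_permute[of 1 "\<lambda>x. x * b" F, unfolded reps_one, OF integral inj assms(3)])
qed

lemma sum_digits_square:
  assumes "s \<in> \<O>"
  shows "(\<Sum>a\<in>digits. of_bool (dvd2 1 (a * a - s))) = (1::nat)"
proof -
  have inj: "x = y" if "x \<in> digits" "y \<in> digits" "dvd2 1 (x * x - y * y)" for x y
  proof -
    have "x \<in> \<O>" "y \<in> \<O>"
      using that digits_integral by auto
    then have "dvd2 1 ((x * x - y * y) - 2 * (y * (x - y)))"
      using that(3) by (intro dvd2_diff[OF _ dvd2_two_mult] integral_intros)
    then have "dvd2 1 ((x - y) * (x - y))"
      by (simp add: algebra_simps)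
    then show ?thesis
      using that digits_unique dvd2_one_square_iff by blast
  qed
  have inv: "invariant_mod 1 (\<lambda>x. of_bool (dvd2 1 (x - s)) :: nat)"
    unfolding invariant_mod_def by (simp add: dvd2_diff_cong)
  have integral: "x * x \<in> \<O>" if "x \<in> digits" for x
    using that digits_integral by (blast intro: integral_mult)
  have "(\<Sum>a\<in>digits. of_bool (dvd2 1 (a * a - s))) = (\<Sum>a\<in>digits. of_bool (dvd2 1 (a - s)) :: nat)"
    by (rule sum_reps_permute[of 1 "\<lambda>x. x * x", unfolded reps_one, OF integral inj inv])
  then show ?thesis
    using sum_reps_dvd2_diff[OF assms, of 1] by (simp only: reps_one)
qed

lemma card_cls_pairs:
  assumes P: "\<And>x1 x2 y1 y2. x1 \<in> \<O> \<Longrightarrow> x2 \<in> \<O> \<Longrightarrow> y1 \<in> \<O> \<Longrightarrow> y2 \<in> \<O> \<Longrightarrow>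
      dvd2 n (x1 - y1) \<Longrightarrow> dvd2 n (x2 - y2) \<Longrightarrow> P x1 x2 \<longleftrightarrow> P y1 y2"
  shows "card {(cls val n x1, cls val n x2) | x1 x2. x1 \<in> \<O> \<and> x2 \<in> \<O> \<and> P x1 x2}
       = (\<Sum>x1\<in>reps n. \<Sum>x2\<in>reps n. of_bool (P x1 x2))"
proof -
  let ?f = "\<lambda>(y1, y2). (cls val n y1, cls val n y2)"
  let ?S = "{(y1, y2) \<in> reps n \<times> reps n. P y1 y2}"
  have "{(cls val n x1, cls val n x2) | x1 x2. x1 \<in> \<O> \<and> x2 \<in> \<O> \<and> P x1 x2} = ?f ` ?S"
  proof (intro equalityI subsetI)
    fix C assume "C \<in> {(cls val n x1, cls val n x2) | x1 x2. x1 \<in> \<O> \<and> x2 \<in> \<O> \<and> P x1 x2}"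
    then obtain x1 x2 where x: "x1 \<in> \<O>" "x2 \<in> \<O>" "P x1 x2" "C = (cls val n x1, cls val n x2)"
      by blast
    have r: "rep n x1 \<in> reps n" "rep n x2 \<in> reps n" "dvd2 n (x1 - rep n x1)" "dvd2 n (x2 - rep n x2)"
      using rep_spec x(1,2) by blast+
    then have r': "rep n x1 \<in> \<O>" "rep n x2 \<in> \<O>"
      using reps_integral by blast+
    have "P (rep n x1) (rep n x2)"
      using P[OF x(1,2) r'] r(3,4) x(3) by blast
    moreover have "C = ?f (rep n x1, rep n x2)"
      using cls_eq_iff[OF x(1) r'(1)] cls_eq_iff[OF x(2) r'(2)] r(3,4) x(4) by simp
    ultimately show "C \<in> ?f ` ?S"
      using r(1,2) by blast
  next
    fix C assume "C \<in> ?f ` ?S"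
    then obtain y1 y2 where "y1 \<in> reps n" "y2 \<in> reps n" "P y1 y2" "C = (cls val n y1, cls val n y2)"
      by auto
    then show "C \<in> {(cls val n x1, cls val n x2) | x1 x2. x1 \<in> \<O> \<and> x2 \<in> \<O> \<and> P x1 x2}"
      using reps_integral by blast
  qed
  moreover have "inj_on ?f ?S"
  proof (rule inj_onI)
    fix p p' assume p: "p \<in> ?S" "p' \<in> ?S" "?f p = ?f p'"
    then have m: "fst p \<in> reps n" "snd p \<in> reps n" "fst p' \<in> reps n" "snd p' \<in> reps n"
      by auto
    then have o: "fst p \<in> \<O>" "snd p \<in> \<O>" "fst p' \<in> \<O>" "snd p' \<in> \<O>"
      using reps_integral by blast+
    have "cls val n (fst p) = cls val n (fst p')" "cls val n (snd p) = cls val n (snd p')"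
      using p(3) by (simp_all add: split_def)
    then have "dvd2 n (fst p - fst p')" "dvd2 n (snd p - snd p')"
      using cls_eq_iff[OF o(1,3)] cls_eq_iff[OF o(2,4)] by simp_all
    then show "p = p'"
      using reps_unique m by (simp add: prod_eq_iff)
  qed
  moreover have "card ?S = (\<Sum>x1\<in>reps n. \<Sum>x2\<in>reps n. of_bool (P x1 x2))"
  proof -
    have "?S = (reps n \<times> reps n) \<inter> {p. P (fst p) (snd p)}"
      by auto
    then have "card ?S = (\<Sum>p\<in>reps n \<times> reps n. of_bool (P (fst p) (snd p)))"
      using finite_reps by simp
    then show ?thesis
      by (simp only: sum.cartesian_product split_def)
  qed
  ultimately show ?thesis
    by (simp only: card_image)
qed

section \<open>Counting solutions of congruences\<close>

lemma two_le_q: "2 \<le> q"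
proof -
  obtain r where r: "r \<in> digits" "dvd2 1 (1 - r)"
    using digits_exists integral_one by blast
  then have "r \<noteq> 0"
    using not_dvd2_one by auto
  then have "card {0, r} \<le> card digits"
    using zero_in_digits r finite_digits by (intro card_mono) auto
  then show ?thesis
    using \<open>r \<noteq> 0\<close> card_digits by simp
qed

lemma invariant_mod_sum:
  assumes "\<And>c. c \<in> C \<Longrightarrow> invariant_mod n (\<lambda>a. F a c)"
  shows "invariant_mod n (\<lambda>a. \<Sum>c\<in>C. F a c)"
  unfolding invariant_mod_def
proof (intro ballI impI sum.cong refl)
  fix x y c assume "x \<in> \<O>" "y \<in> \<O>" "dvd2 n (x - y)" "c \<in> C"
  then show "F x c = F y c"
    using assms unfolding invariant_mod_def by blast
qed

lemma invariant_mod_dvd2_indicator: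
  assumes "\<And>x y. x \<in> \<O> \<Longrightarrow> y \<in> \<O> \<Longrightarrow> \<exists>H\<in>\<O>. F x - F y = 2 ^ k * (x - y) * H"
  shows "invariant_mod n (\<lambda>x. of_bool (dvd2 (n + k) (F x - \<rho>)) :: nat)"
  unfolding invariant_mod_def
proof (intro ballI impI)
  fix x y assume xy: "x \<in> \<O>" "y \<in> \<O>" "dvd2 n (x - y)"
  obtain H where H: "H \<in> \<O>" "F x - F y = 2 ^ k * ((x - y) * H)"
    using assms[OF xy(1,2)] by (auto simp: mult.assoc)
  have "dvd2 (n + k) (F x - F y)"
    using H dvd2_mult_integral[OF xy(3) H(1)] dvd2_two_power_mult_iff by simp
  then have "dvd2 (n + k) ((F y - \<rho>) + (F x - F y)) \<longleftrightarrow> dvd2 (n + k) (F y - \<rho>)"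
    by (rule dvd2_add_left_iff)
  then show "of_bool (dvd2 (n + k) (F x - \<rho>)) = (of_bool (dvd2 (n + k) (F y - \<rho>)) :: nat)"
    by simp
qed

lemma sum_reps_Suc_even:
  assumes "\<And>x. x \<in> \<O> \<Longrightarrow> \<not> dvd2 1 x \<Longrightarrow> F x = 0"
  shows "(\<Sum>x\<in>reps (Suc n). F x) = (\<Sum>y\<in>reps n. F (2 * y))"
proof -
  have "F (r + 2 * y) = 0" if "r \<in> digits" "r \<noteq> 0" "y \<in> reps n" for r y
  proof (rule assms)
    have "r \<in> \<O>" "y \<in> \<O>"
      using that digits_integral reps_integral by auto
    then show "r + 2 * y \<in> \<O>"
      by (intro integral_intros)
    show "\<not> dvd2 1 (r + 2 * y)"
      using reps_Suc_unique[of r 0 y 0] that zero_in_digits \<open>y \<in> \<O>\<close> integral_zero by auto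
  qed
  then have zero: "(\<Sum>r\<in>digits - {0}. \<Sum>y\<in>reps n. F (r + 2 * y)) = 0"
    by (intro sum.neutral ballI) simp
  have "(\<Sum>x\<in>reps (Suc n). F x) = (\<Sum>r\<in>digits. \<Sum>y\<in>reps n. F (r + 2 * y))"
    by (rule sum_reps_Suc_low)
  also have "\<dots> = (\<Sum>y\<in>reps n. F (0 + 2 * y)) + (\<Sum>r\<in>digits - {0}. \<Sum>y\<in>reps n. F (r + 2 * y))"
    by (rule sum.remove[OF finite_digits zero_in_digits])
  finally show ?thesis
    by (simp only: zero add_0 add_0_right)
qed

lemma sum2_reps_Suc:
  "(\<Sum>a\<in>reps (Suc n). \<Sum>b\<in>reps (Suc n). F a b) =
   (\<Sum>a\<in>reps n. \<Sum>b\<in>reps n. \<Sum>r1\<in>digits. \<Sum>r2\<in>digits. F (a + 2 ^ n * r1) (b + 2 ^ n * r2))"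
  by (simp only: sum_reps_Suc) (rule sum.cong[OF refl], rule sum.swap)

lemma sum2_digits_linear:
  assumes "e \<in> \<O>" "a \<in> \<O>" "b \<in> \<O>" "\<not> (dvd2 1 a \<and> dvd2 1 b)"
  shows "(\<Sum>r1\<in>digits. \<Sum>r2\<in>digits. of_bool (dvd2 1 (e + b * r1 + a * r2))) = q"
proof (cases "dvd2 1 a")
  case False
  have "(\<Sum>r2\<in>digits. of_bool (dvd2 1 ((e + b * r1) + a * r2))) = (1::nat)" if "r1 \<in> digits" for r1
    using that assms False digits_integral by (intro sum_digits_linear integral_intros) auto
  then show ?thesis
    by (simp add: card_digits del: sum_of_bool_eq)
next
  case True
  have one: "(\<Sum>r1\<in>digits. of_bool (dvd2 1 ((e + a * r2) + b * r1))) = (1::nat)" if "r2 \<in> digits" for r2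
    using that assms True digits_integral by (intro sum_digits_linear integral_intros) auto
  have "e + b * r1 + a * r2 = (e + a * r2) + b * r1" for r1 r2
    by (simp add: algebra_simps)
  then have "(\<Sum>r2\<in>digits. \<Sum>r1\<in>digits. of_bool (dvd2 1 (e + b * r1 + a * r2))) = (\<Sum>r2\<in>digits. 1::nat)"
    using one by (intro sum.cong refl) (simp only:)
  then have "(\<Sum>r2\<in>digits. \<Sum>r1\<in>digits. of_bool (dvd2 1 (e + b * r1 + a * r2))) = q"
    by (simp add: card_digits)
  then show ?thesis
    by (subst sum.swap)
qed

definition sol_count :: "nat \<Rightarrow> ('k \<Rightarrow> 'k \<Rightarrow> 'k) \<Rightarrow> 'k \<Rightarrow> nat" where
  "sol_count n F \<rho> = (\<Sum>a\<in>reps n. \<Sum>c\<in>reps n. of_bool (dvd2 n (F a c - \<rho>)))"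

lemma sol_count_zero: "F 0 0 - \<rho> \<in> \<O> \<Longrightarrow> sol_count 0 F \<rho> = 1"
  by (simp add: sol_count_def integral_iff_dvd2_0 del: sum_of_bool_eq)

lemma sol_count_cong:
  assumes "dvd2 n (\<rho> - \<rho>')"
  shows "sol_count n F \<rho> = sol_count n F \<rho>'"
proof -
  have "dvd2 n (x - \<rho>) \<longleftrightarrow> dvd2 n (x - \<rho>')" for x
    using dvd2_add_left_iff[of n "\<rho>' - \<rho>" "x - \<rho>'"] assms dvd2_diff_commute by simp
  then show ?thesis
    by (simp only: sol_count_def)
qed

lemma Xl_diagonal_form:
  assumes "\<Delta> \<in> \<O>"
  shows "Xl val q (\<lambda>x1 x2. x1 ^ 2 - \<Delta> * x2 ^ 2) \<rho> l
       = real (sol_count (l + 1) (\<lambda>x1 x2. x1 ^ 2 - \<Delta> * x2 ^ 2) \<rho>) / real q ^ (2 * (l + 1))"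
proof -
  let ?B = "\<lambda>x1 x2. x1 ^ 2 - \<Delta> * x2 ^ 2"
  have "dvd2 n (?B x1 x2 - \<rho>) \<longleftrightarrow> dvd2 n (?B y1 y2 - \<rho>)"
    if "x1 \<in> \<O>" "x2 \<in> \<O>" "y1 \<in> \<O>" "y2 \<in> \<O>" "dvd2 n (x1 - y1)" "dvd2 n (x2 - y2)" for n x1 x2 y1 y2
  proof -
    have D: "dvd2 n ((x1 - y1) * (x1 + y1) - (x2 - y2) * ((x2 + y2) * \<Delta>))"
      using that assms
      by (intro dvd2_diff[OF dvd2_mult_integral[OF that(5)] dvd2_mult_integral[OF that(6)]] integral_intros)
    have "?B x1 x2 - \<rho> = (?B y1 y2 - \<rho>) + ((x1 - y1) * (x1 + y1) - (x2 - y2) * ((x2 + y2) * \<Delta>))"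
      by (simp add: power2_eq_square algebra_simps)
    then show ?thesis
      by (simp only: dvd2_add_left_iff[OF D])
  qed
  then have "card {(cls val (l + 1) x1, cls val (l + 1) x2) | x1 x2.
      x1 \<in> \<O> \<and> x2 \<in> \<O> \<and> dvd2 (l + 1) (?B x1 x2 - \<rho>)} = sol_count (l + 1) ?B \<rho>"
    unfolding sol_count_def by (rule card_cls_pairs)
  then show ?thesis
    by (simp add: Xl_def dvd2_def)
qed

lemma sum_digits_unit_square:
  assumes "g \<in> \<O>" "\<not> dvd2 1 g" "s \<in> \<O>" "\<not> dvd2 1 s"
  shows "(\<Sum>b\<in>digits - {0}. of_bool (dvd2 1 (b * b * g - s))) = (1::nat)"
proof -
  have g: "g \<noteq> 0" "inverse g \<in> \<O>"
    using unit_inverse_integral[OF assms(1,2)] by auto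
  have "b * b * g - s = g * (b * b - s * inverse g)" for b
    using g(1) by (simp add: algebra_simps)
  then have iff: "dvd2 1 (b * b * g - s) \<longleftrightarrow> dvd2 1 (b * b - s * inverse g)" for b
    using dvd2_unit_mult_iff[OF assms(1,2)] by simp
  have "\<not> dvd2 1 (0 * 0 * g - s)"
    using assms(4) by simp
  then have "(\<Sum>b\<in>digits - {0}. of_bool (dvd2 1 (b * b * g - s)))
      = (\<Sum>b\<in>digits. of_bool (dvd2 1 (b * b * g - s)) :: nat)"
    using sum.remove[OF finite_digits zero_in_digits, of "\<lambda>b. of_bool (dvd2 1 (b * b * g - s)) :: nat"]
    by (simp del: sum_of_bool_eq)
  also have "\<dots> = (\<Sum>b\<in>digits. of_bool (dvd2 1 (b * b - s * inverse g)))"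
    by (simp only: iff)
  also have "\<dots> = 1"
    using assms(3) g(2) by (intro sum_digits_square integral_intros)
  finally show ?thesis .
qed

lemma residue_irreducible_if_quad_defect:
  assumes "u \<in> \<O>" "quad_defect val (1 + 4 * u) = ideal_of val 4" "r \<in> \<O>"
  shows "\<not> dvd2 1 (r * r + r - u)"
proof
  assume "dvd2 1 (r * r + r - u)"
  then obtain m where m: "m \<in> \<O>" "r * r + r - u = 2 * m"
    using dvd2D by fastforce
  have um: "u = r * r + r - 2 * m"
    using m(2) by (simp add: algebra_simps)
  have "(1 + 4 * u) - (- 8 * m) = (1 + 2 * r) ^ 2"
    unfolding um by (simp add: power2_eq_square algebra_simps)
  then have "quad_defect val (1 + 4 * u) \<subseteq> ideal_of val (- 8 * m)"
    unfolding quad_defect_def by blast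
  moreover have "(4::'k) \<in> ideal_of val 4"
    unfolding ideal_of_def using integral_one by (intro image_eqI[where x = 1]) auto
  ultimately obtain c where c: "c \<in> \<O>" "4 = - 8 * m * c"
    using assms(2) unfolding ideal_of_def by auto
  have "dvd2 3 (2 ^ 3 * (- (m * c)))"
    using c(1) m(1) by (intro dvd2_two_power_mult integral_intros)
  moreover have "2 ^ 3 * (- (m * c)) = (2::'k) ^ 2 * 1"
    using c(2) by (simp add: mult.assoc)
  ultimately have "dvd2 (1 + 2) ((2::'k) ^ 2 * 1)"
    by (simp only: numeral_3_eq_3 one_add_one[symmetric] add_Suc_right add_0_right One_nat_def)
  then show False
    using not_dvd2_one by (simp only: dvd2_two_power_mult_iff)
qed

lemma four_square_decompose:
  assumes "t \<noteq> 0" "val t = int T"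
  obtains s where "s \<in> \<O>" "\<not> dvd2 1 s" "4 * t ^ 2 = 4 ^ Suc T * s" "4 * t ^ 2 = 2 ^ (2 * T + 2) * s"
proof -
  define t0 where "t0 = t / 2 ^ T"
  have t0: "val t0 = 0" "t0 \<noteq> 0"
    using assms val_mult[of t "inverse (2 ^ T)"] val_inverse[of "2 ^ T"] two_neq_zero
    by (simp_all add: t0_def val_two_power divide_inverse)
  define s where "s = t0 * t0"
  have "val s = 0" "s \<noteq> 0"
    using val_mult[OF t0(2) t0(2)] t0 by (simp_all add: s_def)
  then have s: "s \<in> \<O>" "\<not> dvd2 1 s"
    by (simp_all add: intg_def dvd2_iff_val)
  have "t = 2 ^ T * t0"
    using two_neq_zero by (simp add: t0_def)
  moreover have "(2::'k) ^ T * 2 ^ T = 4 ^ T"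
    using power_mult_distrib[of "2::'k" 2 T] by simp
  ultimately have t2: "t ^ 2 = (2 ^ 2) ^ T * s"
    by (simp add: s_def power2_eq_square algebra_simps)
  have "(2::'k) ^ (2 * T) = 4 ^ T"
    using power_mult[of "2::'k" 2 T] by simp
  then have E: "(2::'k) ^ (2 * T + 2) = 4 ^ Suc T"
    unfolding power_add by simp
  have "4 * t ^ 2 = 4 ^ Suc T * s"
    using t2 by simp
  then have "4 * t ^ 2 = 4 ^ Suc T * s" "4 * t ^ 2 = 2 ^ (2 * T + 2) * s"
    unfolding E by simp_all
  with s show ?thesis
    using that by blast
qed

end

lemma dyadic_valuation_if_unram2_local_field: "unram2_local_field val q \<Longrightarrow> dyadic_valuation val q"
  unfolding unram2_local_field_def by (intro dyadic_valuation.intro) auto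

section \<open>The norm form of the unramified quadratic extension\<close>

locale dyadic_norm_form = dyadic_valuation val q for val :: "'k::field \<Rightarrow> int" and q +
  fixes u :: 'k
  assumes u_integral: "u \<in> \<O>"
    and residue_irreducible: "\<And>r. r \<in> \<O> \<Longrightarrow> \<not> dvd2 1 (r * r + r - u)"
begin

text \<open>\<open>norm_form\<close> is the norm form of the unramified quadratic extension generated by a root
  of \<open>X\<^sup>2 + X - u\<close>, and \<open>shifted_form a c\<close> is \<open>B (a + c) c\<close> for \<open>B x\<^sub>1 x\<^sub>2 = x\<^sub>1\<^sup>2 - (1 + 4u) x\<^sub>2\<^sup>2\<close>.\<close>

definition norm_form :: "'k \<Rightarrow> 'k \<Rightarrow> 'k" where
  "norm_form a b = a * a + a * b - u * b * b"

definition shifted_form :: "'k \<Rightarrow> 'k \<Rightarrow> 'k" where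
  "shifted_form a c = a * a + 2 * a * c - 4 * u * c * c"

lemma shifted_form_two_mult: "shifted_form (2 * a) c = 4 * norm_form a c"
  by (simp add: shifted_form_def norm_form_def algebra_simps)

lemma norm_form_two_mult: "norm_form a (2 * c) = shifted_form a c"
  by (simp add: shifted_form_def norm_form_def algebra_simps)

lemma norm_form_integral: "a \<in> \<O> \<Longrightarrow> b \<in> \<O> \<Longrightarrow> norm_form a b \<in> \<O>"
  using u_integral by (simp add: norm_form_def integral_intros)

lemma shifted_form_dvd2_one_iff:
  assumes "a \<in> \<O>" "c \<in> \<O>"
  shows "dvd2 1 (shifted_form a c - \<rho>) \<longleftrightarrow> dvd2 1 (a * a - \<rho>)"
proof -
  have "dvd2 1 (2 * (a * c - 2 * u * c * c))"
    using assms u_integral by (intro dvd2_two_mult integral_intros)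
  moreover have "shifted_form a c - \<rho> = (a * a - \<rho>) + 2 * (a * c - 2 * u * c * c)"
    by (simp add: shifted_form_def algebra_simps)
  ultimately show ?thesis
    by (simp only: dvd2_add_left_iff)
qed

lemma norm_form_dvd2_one:
  assumes "a \<in> \<O>" "b \<in> \<O>" "dvd2 1 (norm_form a b)"
  shows "dvd2 1 a \<and> dvd2 1 b"
proof (cases "dvd2 1 b")
  case True
  then obtain c where "c \<in> \<O>" "b = 2 * c"
    using dvd2D by fastforce
  then show ?thesis
    using assms shifted_form_dvd2_one_iff[of a c 0] dvd2_one_square_iff True
    by (simp add: norm_form_two_mult)
next
  case False
  have b: "b \<noteq> 0" "inverse b \<in> \<O>"
    using unit_inverse_integral[OF assms(2) False] by auto
  have eq: "norm_form a b = (b * b) * ((a * inverse b) * (a * inverse b) + a * inverse b - u)"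
    using b by (simp add: norm_form_def field_simps)
  have bb: "b * b \<in> \<O>" "\<not> dvd2 1 (b * b)"
    using assms(2) False integral_mult dvd2_one_square_iff by blast+
  have "dvd2 1 ((a * inverse b) * (a * inverse b) + a * inverse b - u)"
    using assms(3) unfolding eq dvd2_unit_mult_iff[OF bb] .
  moreover have "a * inverse b \<in> \<O>"
    using assms(1) b(2) by (rule integral_mult)
  ultimately show ?thesis
    using residue_irreducible by blast
qed

lemma invariant_mod_shifted_form_left:
  assumes "c \<in> \<O>"
  shows "invariant_mod n (\<lambda>a. of_bool (dvd2 n (shifted_form a c - \<rho>)) :: nat)"
proof (rule invariant_mod_dvd2_indicator[where k = 0, simplified])
  fix x y assume "x \<in> \<O>" "y \<in> \<O>"
  then show "\<exists>H\<in>\<O>. shifted_form x c - shifted_form y c = (x - y) * H"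
    using assms by (intro bexI[of _ "x + y + 2 * c"] integral_intros)
      (simp_all add: shifted_form_def algebra_simps)
qed

lemma invariant_mod_shifted_form_right:
  assumes "a \<in> \<O>"
  shows "invariant_mod n (\<lambda>c. of_bool (dvd2 (n + 1) (shifted_form a c - \<rho>)) :: nat)"
proof (rule invariant_mod_dvd2_indicator[where k = 1])
  fix x y assume "x \<in> \<O>" "y \<in> \<O>"
  then show "\<exists>H\<in>\<O>. shifted_form a x - shifted_form a y = 2 ^ 1 * (x - y) * H"
    using assms u_integral by (intro bexI[of _ "a - 2 * u * (x + y)"] integral_intros)
      (simp_all add: shifted_form_def algebra_simps)
qed

lemma invariant_mod_norm_form_left:
  assumes "b \<in> \<O>"
  shows "invariant_mod n (\<lambda>a. of_bool (dvd2 n (norm_form a b - \<rho>)) :: nat)"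
proof (rule invariant_mod_dvd2_indicator[where k = 0, simplified])
  fix x y assume "x \<in> \<O>" "y \<in> \<O>"
  then show "\<exists>H\<in>\<O>. norm_form x b - norm_form y b = (x - y) * H"
    using assms by (intro bexI[of _ "x + y + b"] integral_intros)
      (simp_all add: norm_form_def algebra_simps)
qed

lemma invariant_mod_norm_form_right:
  assumes "a \<in> \<O>"
  shows "invariant_mod n (\<lambda>b. of_bool (dvd2 n (norm_form a b - \<rho>)) :: nat)"
proof (rule invariant_mod_dvd2_indicator[where k = 0, simplified])
  fix x y assume "x \<in> \<O>" "y \<in> \<O>"
  then show "\<exists>H\<in>\<O>. norm_form a x - norm_form a y = (x - y) * H"
    using assms u_integral by (intro bexI[of _ "a - u * (x + y)"] integral_intros)
      (simp_all add: norm_form_def algebra_simps)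
qed

lemma sol_count_shifted_form_level_one:
  assumes "\<rho> \<in> \<O>"
  shows "sol_count 1 shifted_form \<rho> = q"
proof -
  have "sol_count 1 shifted_form \<rho> = (\<Sum>a\<in>digits. \<Sum>c\<in>digits. of_bool (dvd2 1 (a * a - \<rho>)))"
    unfolding sol_count_def reps_one
    using shifted_form_dvd2_one_iff digits_integral by (intro sum.cong refl) auto
  also have "\<dots> = q * (\<Sum>a\<in>digits. of_bool (dvd2 1 (a * a - \<rho>)))"
    by (simp add: card_digits sum_distrib_left del: sum_of_bool_eq)
  also have "\<dots> = q"
    using sum_digits_square[OF assms] by simp
  finally show ?thesis .
qed

text \<open>Modulo \<open>2\<^bsup>m+1\<^esup>\<close> the form \<open>shifted_form a c\<close> only depends on c modulo \<open>2\<^sup>m\<close>.\<close>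

lemma sol_count_shifted_form_Suc:
  "sol_count (Suc m) shifted_form \<rho>
     = q * (\<Sum>a\<in>reps (Suc m). \<Sum>c\<in>reps m. of_bool (dvd2 (Suc m) (shifted_form a c - \<rho>)))"
proof -
  have "(\<Sum>c\<in>reps (Suc m). of_bool (dvd2 (Suc m) (shifted_form a c - \<rho>)))
      = q * (\<Sum>c\<in>reps m. of_bool (dvd2 (Suc m) (shifted_form a c - \<rho>)))" if "a \<in> reps (Suc m)" for a
    using sum_reps_Suc_invariant_mod[OF invariant_mod_shifted_form_right[OF subsetD[OF reps_integral that], of m \<rho>]]
    by (simp del: sum_of_bool_eq)
  then have "sol_count (Suc m) shifted_form \<rho>
      = (\<Sum>a\<in>reps (Suc m). q * (\<Sum>c\<in>reps m. of_bool (dvd2 (Suc m) (shifted_form a c - \<rho>))))"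
    unfolding sol_count_def by (rule sum.cong[OF refl])
  then show ?thesis
    by (simp only: sum_distrib_left)
qed

lemma shifted_form_add_right:
  "shifted_form a (c + h * r) = shifted_form a c + 2 * h * (a * r + 2 * (- 2 * u * c * r - h * u * r * r))"
  by (simp add: shifted_form_def algebra_simps)

lemma not_dvd2_left_if_shifted_form_unit:
  assumes "a \<in> \<O>" "c \<in> \<O>" "dvd2 1 (shifted_form a c - \<rho>)" "\<not> dvd2 1 \<rho>"
  shows "\<not> dvd2 1 a"
proof
  assume "dvd2 1 a"
  moreover have "dvd2 1 (a * a - \<rho>)"
    using shifted_form_dvd2_one_iff assms(1-3) by blast
  ultimately have "dvd2 1 (a * a - (a * a - \<rho>))"
    using dvd2_one_square_iff by (blast intro: dvd2_diff)
  then show False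
    using assms(4) by simp
qed

lemma sum_shifted_form_lift_right:
  assumes "\<rho> \<in> \<O>" "\<not> dvd2 1 \<rho>" "a \<in> \<O>" "c \<in> \<O>"
  shows "(\<Sum>r\<in>digits. of_bool (dvd2 (m + 2) (shifted_form a (c + 2 ^ m * r) - \<rho>)))
       = (of_bool (dvd2 (m + 1) (shifted_form a c - \<rho>)) :: nat)"
proof -
  define D where "D r = - 2 * u * c * r - 2 ^ m * u * r * r" for r
  have expand: "shifted_form a (c + 2 ^ m * r) - \<rho> = (shifted_form a c - \<rho>) + 2 ^ (m + 1) * (a * r + 2 * D r)" for r
    by (simp add: shifted_form_add_right D_def algebra_simps)
  have D: "a * r \<in> \<O>" "D r \<in> \<O>" if "r \<in> digits" for r
    using that digits_integral assms(3,4) u_integral by (auto simp: D_def intro!: integral_intros)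
  show ?thesis
  proof (cases "dvd2 (m + 1) (shifted_form a c - \<rho>)")
    case False
    have "\<not> dvd2 (Suc (m + 1)) (shifted_form a (c + 2 ^ m * r) - \<rho>)" if "r \<in> digits" for r
    proof -
      have "a * r + 2 * D r \<in> \<O>"
        using D[OF that] by (blast intro: integral_add integral_mult integral_numeral)
      then show ?thesis
        unfolding expand by (rule not_dvd2_Suc_add_two_power_mult[OF False])
    qed
    then show ?thesis
      using False by simp
  next
    case True
    then obtain e where e: "e \<in> \<O>" "shifted_form a c - \<rho> = 2 ^ (m + 1) * e"
      using dvd2D by blast
    have "dvd2 (Suc (m + 1)) (shifted_form a (c + 2 ^ m * r) - \<rho>) \<longleftrightarrow> dvd2 1 (e + a * r)"
      if "r \<in> digits" for r
    proof -
      have eq: "shifted_form a (c + 2 ^ m * r) - \<rho> = 2 ^ (m + 1) * ((e + a * r) + 2 * D r)"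
        unfolding expand e(2) by (simp add: algebra_simps)
      show ?thesis
        unfolding eq by (rule dvd2_Suc_two_power_mult_add_iff[OF dvd2_two_mult[OF D(2)[OF that]]])
    qed
    then have "(\<Sum>r\<in>digits. of_bool (dvd2 (m + 2) (shifted_form a (c + 2 ^ m * r) - \<rho>)))
        = (\<Sum>r\<in>digits. of_bool (dvd2 1 (e + a * r)) :: nat)"
      by (intro sum.cong refl) simp
    also have "\<dots> = 1"
    proof (rule sum_digits_linear[OF e(1) assms(3)])
      have "dvd2 1 (shifted_form a c - \<rho>)"
        using True by (rule dvd2_mono) simp
      then show "\<not> dvd2 1 a"
        using not_dvd2_left_if_shifted_form_unit assms by blast
    qed
    finally show ?thesis
      using True by simp
  qed
qed

lemma sol_count_shifted_form_unit:
  assumes "\<rho> \<in> \<O>" "\<not> dvd2 1 \<rho>"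
  shows "sol_count (Suc m) shifted_form \<rho> = q ^ Suc m"
proof (induction m)
  case 0
  show ?case
    using sol_count_shifted_form_level_one[OF assms(1)] by simp
next
  case (Suc m)
  let ?I = "\<lambda>n a c. of_bool (dvd2 n (shifted_form a c - \<rho>)) :: nat"
  have "sol_count (Suc (Suc m)) shifted_form \<rho>
      = q * (\<Sum>a\<in>reps (Suc (Suc m)). \<Sum>c\<in>reps m. \<Sum>r\<in>digits. ?I (m + 2) a (c + 2 ^ m * r))"
    by (simp add: sol_count_shifted_form_Suc sum_reps_Suc del: sum_of_bool_eq)
  also have "\<dots> = q * (\<Sum>a\<in>reps (Suc (Suc m)). \<Sum>c\<in>reps m. ?I (m + 1) a c)"
  proof -
    have "(\<Sum>r\<in>digits. ?I (m + 2) a (c + 2 ^ m * r)) = ?I (m + 1) a c"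
      if "a \<in> reps (Suc (Suc m))" "c \<in> reps m" for a c
      using sum_shifted_form_lift_right[OF assms subsetD[OF reps_integral that(1)] subsetD[OF reps_integral that(2)]] .
    then show ?thesis
      by (simp del: sum_of_bool_eq cong: sum.cong_simp)
  qed
  also have "\<dots> = q * (q * (\<Sum>a\<in>reps (Suc m). \<Sum>c\<in>reps m. ?I (m + 1) a c))"
    using reps_integral
    by (subst sum_reps_Suc_invariant_mod) (auto intro!: invariant_mod_sum invariant_mod_shifted_form_left)
  also have "\<dots> = q * sol_count (Suc m) shifted_form \<rho>"
    by (simp add: sol_count_shifted_form_Suc del: sum_of_bool_eq)
  finally show ?case
    using Suc.IH by simp
qed

lemma sol_count_norm_form_level_one:
  assumes s: "s \<in> \<O>" "\<not> dvd2 1 s"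
  shows "sol_count 1 norm_form s = q + 1"
proof -
  let ?P = "\<lambda>a b. of_bool (dvd2 1 (norm_form a b - s)) :: nat"
  let ?Q = "\<lambda>a b. of_bool (dvd2 1 (b * b * (a * a + a - u) - s)) :: nat"
  have scale: "(\<Sum>a\<in>digits. ?P a b) = (\<Sum>a\<in>digits. ?Q a b)" if b: "b \<in> digits - {0}" for b
  proof -
    have bO: "b \<in> \<O>" "\<not> dvd2 1 b"
      using b digits_integral digit_dvd2_one by auto
    have "(\<Sum>a\<in>digits. ?P a b) = (\<Sum>a\<in>digits. ?P (a * b) b)"
      using sum_digits_unit_scale[OF bO invariant_mod_norm_form_left[OF bO(1)]] by simp
    also have "\<dots> = (\<Sum>a\<in>digits. ?Q a b)"
      by (simp add: norm_form_def algebra_simps del: sum_of_bool_eq)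
    finally show ?thesis .
  qed
  have "sol_count 1 norm_form s = (\<Sum>b\<in>digits. \<Sum>a\<in>digits. ?P a b)"
    unfolding sol_count_def reps_one by (rule sum.swap)
  also have "\<dots> = (\<Sum>a\<in>digits. ?P a 0) + (\<Sum>b\<in>digits - {0}. \<Sum>a\<in>digits. ?P a b)"
    by (rule sum.remove[OF finite_digits zero_in_digits])
  also have "(\<Sum>a\<in>digits. ?P a 0) = 1"
    using sum_digits_square[OF s(1)] by (simp add: norm_form_def del: sum_of_bool_eq)
  also have "(\<Sum>b\<in>digits - {0}. \<Sum>a\<in>digits. ?P a b) = (\<Sum>a\<in>digits. \<Sum>b\<in>digits - {0}. ?Q a b)"
    using scale by (simp add: sum.swap[of _ "digits - {0}"] del: sum_of_bool_eq)
  also have "\<dots> = (\<Sum>a\<in>digits. 1)"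
  proof (rule sum.cong[OF refl])
    fix a assume "a \<in> digits"
    then have "a \<in> \<O>"
      using digits_integral by blast
    then show "(\<Sum>b\<in>digits - {0}. ?Q a b) = 1"
      using residue_irreducible u_integral s by (intro sum_digits_unit_square integral_intros) auto
  qed
  finally show ?thesis
    using card_digits by simp
qed

lemma norm_form_add:
  "norm_form (a + h * r1) (b + h * r2)
     = norm_form a b + h * ((b * r1 + a * r2) + 2 * (a * r1 - u * b * r2) + h * norm_form r1 r2)"
  by (simp add: norm_form_def algebra_simps)

lemma not_both_dvd2_if_norm_form_unit:
  assumes "a \<in> \<O>" "b \<in> \<O>" "dvd2 1 (norm_form a b - s)" "\<not> dvd2 1 s"
  shows "\<not> (dvd2 1 a \<and> dvd2 1 b)"
proof
  assume "dvd2 1 a \<and> dvd2 1 b"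
  moreover have "norm_form a b = a * a + a * b - b * (u * b)"
    by (simp add: norm_form_def algebra_simps)
  ultimately have "dvd2 1 (norm_form a b)"
    using assms(1,2) u_integral by (auto intro!: dvd2_diff dvd2_add dvd2_mult_integral integral_intros)
  then have "dvd2 1 (norm_form a b - (norm_form a b - s))"
    using assms(3) by (rule dvd2_diff)
  then show False
    using assms(4) by simp
qed

lemma sum_norm_form_lift:
  assumes n: "1 \<le> n" and s: "s \<in> \<O>" "\<not> dvd2 1 s" and ab: "a \<in> \<O>" "b \<in> \<O>"
  shows "(\<Sum>r1\<in>digits. \<Sum>r2\<in>digits. of_bool (dvd2 (Suc n) (norm_form (a + 2 ^ n * r1) (b + 2 ^ n * r2) - s)))
       = q * of_bool (dvd2 n (norm_form a b - s))"
proof -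
  define D where "D r1 r2 = 2 * (a * r1 - u * b * r2) + 2 ^ n * norm_form r1 r2" for r1 r2
  have expand: "norm_form (a + 2 ^ n * r1) (b + 2 ^ n * r2) - s
      = (norm_form a b - s) + 2 ^ n * ((b * r1 + a * r2) + D r1 r2)" for r1 r2
    unfolding norm_form_add D_def by (simp add: algebra_simps)
  have D: "b * r1 + a * r2 \<in> \<O>" "dvd2 1 (D r1 r2)" if "r1 \<in> digits" "r2 \<in> digits" for r1 r2
  proof -
    have r: "r1 \<in> \<O>" "r2 \<in> \<O>"
      using that digits_integral by auto
    then show "b * r1 + a * r2 \<in> \<O>"
      using ab by (intro integral_intros)
    have "dvd2 n (2 ^ n * norm_form r1 r2)"
      using r norm_form_integral dvd2_two_power_mult by blast
    then have "dvd2 1 (2 ^ n * norm_form r1 r2)"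
      using n dvd2_mono by blast
    moreover have "dvd2 1 (2 * (a * r1 - u * b * r2))"
      using r ab u_integral by (intro dvd2_two_mult integral_intros)
    ultimately show "dvd2 1 (D r1 r2)"
      unfolding D_def by (rule dvd2_add[rotated])
  qed
  show ?thesis
  proof (cases "dvd2 n (norm_form a b - s)")
    case False
    have "\<not> dvd2 (Suc n) (norm_form (a + 2 ^ n * r1) (b + 2 ^ n * r2) - s)"
      if "r1 \<in> digits" "r2 \<in> digits" for r1 r2
    proof -
      have "(b * r1 + a * r2) + D r1 r2 \<in> \<O>"
        using D[OF that] dvd2_integral integral_add by blast
      then show ?thesis
        unfolding expand by (rule not_dvd2_Suc_add_two_power_mult[OF False])
    qed
    then show ?thesis
      using False by simp
  next
    case True
    then obtain e where e: "e \<in> \<O>" "norm_form a b - s = 2 ^ n * e"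
      using dvd2D by blast
    have "dvd2 (Suc n) (norm_form (a + 2 ^ n * r1) (b + 2 ^ n * r2) - s) \<longleftrightarrow> dvd2 1 (e + b * r1 + a * r2)"
      if "r1 \<in> digits" "r2 \<in> digits" for r1 r2
    proof -
      have eq: "norm_form (a + 2 ^ n * r1) (b + 2 ^ n * r2) - s = 2 ^ n * ((e + b * r1 + a * r2) + D r1 r2)"
        unfolding expand e(2) by (simp add: algebra_simps)
      show ?thesis
        unfolding eq by (rule dvd2_Suc_two_power_mult_add_iff[OF D(2)[OF that]])
    qed
    then have "(\<Sum>r1\<in>digits. \<Sum>r2\<in>digits. of_bool (dvd2 (Suc n) (norm_form (a + 2 ^ n * r1) (b + 2 ^ n * r2) - s)))
        = (\<Sum>r1\<in>digits. \<Sum>r2\<in>digits. of_bool (dvd2 1 (e + b * r1 + a * r2)) :: nat)"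
      by (simp del: sum_of_bool_eq cong: sum.cong_simp)
    also have "\<dots> = q"
    proof (rule sum2_digits_linear[OF e(1) ab])
      have "dvd2 1 (norm_form a b - s)"
        using True n by (rule dvd2_mono)
      then show "\<not> (dvd2 1 a \<and> dvd2 1 b)"
        using not_both_dvd2_if_norm_form_unit s ab by blast
    qed
    finally show ?thesis
      using True by simp
  qed
qed

lemma sol_count_norm_form_unit:
  assumes "s \<in> \<O>" "\<not> dvd2 1 s"
  shows "sol_count (Suc m) norm_form s = q ^ m * (q + 1)"
proof (induction m)
  case 0
  have "sol_count 1 norm_form s = q + 1"
    by (rule sol_count_norm_form_level_one[OF assms])
  then show ?case
    by (simp only: One_nat_def[symmetric] power_0 mult_1)
next
  case (Suc m)
  have lift: "(\<Sum>r1\<in>digits. \<Sum>r2\<in>digits.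
      of_bool (dvd2 (Suc (Suc m)) (norm_form (a + 2 ^ Suc m * r1) (b + 2 ^ Suc m * r2) - s)))
      = q * of_bool (dvd2 (Suc m) (norm_form a b - s))" if "a \<in> reps (Suc m)" "b \<in> reps (Suc m)" for a b
    by (rule sum_norm_form_lift[OF _ assms subsetD[OF reps_integral that(1)] subsetD[OF reps_integral that(2)]]) simp
  have "sol_count (Suc (Suc m)) norm_form s
      = (\<Sum>a\<in>reps (Suc m). \<Sum>b\<in>reps (Suc m). \<Sum>r1\<in>digits. \<Sum>r2\<in>digits.
          of_bool (dvd2 (Suc (Suc m)) (norm_form (a + 2 ^ Suc m * r1) (b + 2 ^ Suc m * r2) - s)))"
    unfolding sol_count_def by (rule sum2_reps_Suc)
  also have "\<dots> = (\<Sum>a\<in>reps (Suc m). \<Sum>b\<in>reps (Suc m). q * of_bool (dvd2 (Suc m) (norm_form a b - s)))"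
    using lift by (simp del: sum_of_bool_eq cong: sum.cong_simp)
  also have "\<dots> = q * sol_count (Suc m) norm_form s"
    by (simp add: sol_count_def sum_distrib_left del: sum_of_bool_eq)
  finally show ?case
    using Suc.IH by (simp add: algebra_simps)
qed

lemma shifted_form_four_mult_odd:
  assumes "a \<in> \<O>" "\<not> dvd2 1 a" "c \<in> \<O>" "\<rho> \<in> \<O>"
  shows "\<not> dvd2 1 (shifted_form a c - 4 * \<rho>)"
proof
  assume "dvd2 1 (shifted_form a c - 4 * \<rho>)"
  then have "dvd2 1 (a * a - 2 * (2 * \<rho>))"
    using shifted_form_dvd2_one_iff[OF assms(1,3)] by simp
  then have "dvd2 1 (a * a - 2 * (2 * \<rho>) + 2 * (2 * \<rho>))"
    using assms(4) by (intro dvd2_add dvd2_two_mult integral_intros)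
  then show False
    using assms(2) dvd2_one_square_iff by simp
qed

lemma sol_count_shifted_form_four_mult:
  assumes "\<rho> \<in> \<O>"
  shows "sol_count (n + 2) shifted_form (4 * \<rho>) = q ^ 3 * sol_count n norm_form \<rho>"
proof -
  let ?I = "\<lambda>a c. of_bool (dvd2 (n + 2) (shifted_form a c - 4 * \<rho>)) :: nat"
  let ?J = "\<lambda>y c. of_bool (dvd2 n (norm_form y c - \<rho>)) :: nat"
  have odd: "(\<Sum>c\<in>reps (n + 2). ?I a c) = 0" if "a \<in> \<O>" "\<not> dvd2 1 a" for a
    using shifted_form_four_mult_odd[OF that _ assms] dvd2_mono[of "n + 2" _ 1] reps_integral
    by (intro sum.neutral ballI) (simp, blast)
  have inner: "(\<Sum>c\<in>reps (Suc (Suc n)). ?J y c) = q * q * (\<Sum>c\<in>reps n. ?J y c)" if "y \<in> \<O>" for y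
  proof -
    have inv: "invariant_mod n (?J y)"
      by (rule invariant_mod_norm_form_right[OF that])
    have "(\<Sum>c\<in>reps (Suc (Suc n)). ?J y c) = q * (\<Sum>c\<in>reps (Suc n). ?J y c)"
      by (rule sum_reps_Suc_invariant_mod[OF invariant_mod_mono[OF inv]]) simp
    also have "\<dots> = q * (q * (\<Sum>c\<in>reps n. ?J y c))"
      by (simp only: sum_reps_Suc_invariant_mod[OF inv])
    finally show ?thesis
      by simp
  qed
  have "sol_count (n + 2) shifted_form (4 * \<rho>) = (\<Sum>a\<in>reps (Suc (Suc n)). \<Sum>c\<in>reps (n + 2). ?I a c)"
    by (simp add: sol_count_def del: sum_of_bool_eq)
  also have "\<dots> = (\<Sum>y\<in>reps (Suc n). \<Sum>c\<in>reps (n + 2). ?I (2 * y) c)"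
    using odd by (rule sum_reps_Suc_even)
  also have "\<dots> = (\<Sum>y\<in>reps (Suc n). \<Sum>c\<in>reps (n + 2). ?J y c)"
    by (simp only: shifted_form_two_mult right_diff_distrib[symmetric] dvd2_four_mult_iff)
  also have "\<dots> = q * q * (\<Sum>y\<in>reps (Suc n). \<Sum>c\<in>reps n. ?J y c)"
    using inner reps_integral by (simp add: sum_distrib_left subset_iff del: sum_of_bool_eq cong: sum.cong_simp)
  also have "(\<Sum>y\<in>reps (Suc n). \<Sum>c\<in>reps n. ?J y c) = q * sol_count n norm_form \<rho>"
    unfolding sol_count_def
    using reps_integral by (intro sum_reps_Suc_invariant_mod invariant_mod_sum invariant_mod_norm_form_left) auto
  finally show ?thesis
    by (simp add: power3_eq_cube)
qed

lemma sol_count_norm_form_even: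
  assumes "\<rho> \<in> \<O>" "dvd2 1 \<rho>"
  shows "q * sol_count (Suc n) norm_form \<rho> = sol_count (Suc n) shifted_form \<rho>"
proof -
  let ?J = "\<lambda>a c. of_bool (dvd2 (Suc n) (norm_form a c - \<rho>)) :: nat"
  have "(\<Sum>c\<in>reps (Suc n). ?J a c) = (\<Sum>c\<in>reps n. of_bool (dvd2 (Suc n) (shifted_form a c - \<rho>)))"
    if "a \<in> reps (Suc n)" for a
  proof -
    have a: "a \<in> \<O>"
      using that reps_integral by blast
    have "?J a c = 0" if "c \<in> \<O>" "\<not> dvd2 1 c" for c
    proof -
      have "\<not> dvd2 1 (norm_form a c - \<rho>)"
      proof
        assume "dvd2 1 (norm_form a c - \<rho>)"
        then have "dvd2 1 (norm_form a c - \<rho> + \<rho>)"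
          using assms(2) by (rule dvd2_add)
        then show False
          using norm_form_dvd2_one[OF a that(1)] that(2) by simp
      qed
      then show ?thesis
        using dvd2_mono[of "Suc n" _ 1] by auto
    qed
    then have "(\<Sum>c\<in>reps (Suc n). ?J a c) = (\<Sum>c\<in>reps n. ?J a (2 * c))"
      by (rule sum_reps_Suc_even)
    then show ?thesis
      by (simp only: norm_form_two_mult)
  qed
  then have "sol_count (Suc n) norm_form \<rho>
      = (\<Sum>a\<in>reps (Suc n). \<Sum>c\<in>reps n. of_bool (dvd2 (Suc n) (shifted_form a c - \<rho>)))"
    unfolding sol_count_def by (rule sum.cong[OF refl])
  then show ?thesis
    by (simp only: sol_count_shifted_form_Suc)
qed

lemma sol_count_shifted_form_four_mult_even:
  assumes "\<rho> \<in> \<O>" "dvd2 1 \<rho>"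
  shows "sol_count (n + 3) shifted_form (4 * \<rho>) = q ^ 2 * sol_count (Suc n) shifted_form \<rho>"
proof -
  have "sol_count (n + 3) shifted_form (4 * \<rho>) = q ^ 3 * sol_count (Suc n) norm_form \<rho>"
    using sol_count_shifted_form_four_mult[OF assms(1), of "Suc n"] by (simp add: eval_nat_numeral)
  also have "\<dots> = q ^ 2 * (q * sol_count (Suc n) norm_form \<rho>)"
    by (simp add: power_numeral_reduce)
  finally show ?thesis
    by (simp only: sol_count_norm_form_even[OF assms])
qed

lemma sol_count_shifted_form_zero: "sol_count (Suc l) shifted_form 0 = q ^ (l + 1 + l mod 2)"
proof (induction l rule: nat_induct2)
  case 0
  show ?case
    using sol_count_shifted_form_level_one[OF integral_zero] by simp
next
  case 1
  have "sol_count (0 + 2) shifted_form (4 * 0) = q ^ 3 * sol_count 0 norm_form 0"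
    using sol_count_shifted_form_four_mult[OF integral_zero] .
  moreover have "sol_count 0 norm_form 0 = 1"
    by (rule sol_count_zero) (simp add: norm_form_def integral_zero)
  ultimately show ?case
    by (simp add: power3_eq_cube)
next
  case (step l)
  have "sol_count (Suc (l + 2)) shifted_form 0 = q ^ 2 * sol_count (Suc l) shifted_form 0"
    using sol_count_shifted_form_four_mult_even[OF integral_zero, of l] by (simp add: eval_nat_numeral)
  also have "\<dots> = q ^ (2 + (l + 1 + l mod 2))"
    using step by (simp add: power_add power2_eq_square)
  also have "2 + (l + 1 + l mod 2) = l + 2 + 1 + (l + 2) mod 2"
    by simp
  finally show ?case .
qed

lemma sol_count_shifted_form_four_power_unit:
  assumes "s \<in> \<O>" "\<not> dvd2 1 s" "2 * T + 2 \<le> l"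
  shows "sol_count (Suc l) shifted_form (4 ^ Suc T * s) = q ^ Suc l * (q + 1)"
  using assms(3)
proof (induction T arbitrary: l)
  case 0
  define m where "m = l - 2"
  have l: "Suc l = Suc m + 2"
    using 0 by (simp add: m_def)
  have "sol_count (Suc m + 2) shifted_form (4 * s) = q ^ 3 * sol_count (Suc m) norm_form s"
    by (rule sol_count_shifted_form_four_mult[OF assms(1)])
  then show ?case
    unfolding l using sol_count_norm_form_unit[OF assms(1,2)] by (simp add: power_add power_numeral_reduce algebra_simps)
next
  case (Suc T)
  define k where "k = l - 2"
  have l: "Suc l = k + 3" and k: "2 * T + 2 \<le> k"
    using Suc.prems by (simp_all add: k_def)
  have "4 ^ Suc T * s = 2 * (2 * 4 ^ T * s)"
    by simp
  moreover have "2 * 4 ^ T * s \<in> \<O>"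
    using assms(1) by (intro integral_intros)
  ultimately have "4 ^ Suc T * s \<in> \<O>" "dvd2 1 (4 ^ Suc T * s)"
    using dvd2_two_mult dvd2_integral by metis+
  have eq: "4 ^ Suc (Suc T) * s = 4 * (4 ^ Suc T * s)"
    by simp
  have "sol_count (Suc l) shifted_form (4 ^ Suc (Suc T) * s) = sol_count (k + 3) shifted_form (4 * (4 ^ Suc T * s))"
    by (simp only: l eq)
  also have "\<dots> = q ^ 2 * sol_count (Suc k) shifted_form (4 ^ Suc T * s)"
    by (rule sol_count_shifted_form_four_mult_even) fact+
  also have "\<dots> = q ^ 2 * (q ^ Suc k * (q + 1))"
    by (simp only: Suc.IH[OF k])
  finally show ?case
    using l by (simp add: power_add eval_nat_numeral algebra_simps)
qed

lemma sol_count_diagonal_eq_shifted: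
  "sol_count n (\<lambda>x1 x2. x1 ^ 2 - (1 + 4 * u) * x2 ^ 2) \<rho> = sol_count n shifted_form \<rho>"
proof -
  let ?F = "\<lambda>x2 a. of_bool (dvd2 n (shifted_form a x2 - \<rho>)) :: nat"
  have B: "x1 ^ 2 - (1 + 4 * u) * x2 ^ 2 = shifted_form (x1 - x2) x2" for x1 x2
    by (simp add: shifted_form_def power2_eq_square algebra_simps)
  have "(\<Sum>x1\<in>reps n. ?F x2 (x1 - x2)) = (\<Sum>a\<in>reps n. ?F x2 a)" if "x2 \<in> reps n" for x2
  proof (rule sum_reps_permute)
    have "x2 \<in> \<O>"
      using that reps_integral by blast
    then show "x - x2 \<in> \<O>" if "x \<in> reps n" for x
      using that reps_integral by (blast intro: integral_diff)
    show "invariant_mod n (?F x2)"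
      using \<open>x2 \<in> \<O>\<close> by (rule invariant_mod_shifted_form_left)
  next
    fix x y assume "x \<in> reps n" "y \<in> reps n" "dvd2 n ((x - x2) - (y - x2))"
    then show "x = y"
      using reps_unique by simp
  qed
  then have "(\<Sum>x2\<in>reps n. \<Sum>x1\<in>reps n. ?F x2 (x1 - x2)) = (\<Sum>x2\<in>reps n. \<Sum>a\<in>reps n. ?F x2 a)"
    by (rule sum.cong[OF refl])
  moreover have "sol_count n (\<lambda>x1 x2. x1 ^ 2 - (1 + 4 * u) * x2 ^ 2) \<rho>
      = (\<Sum>x2\<in>reps n. \<Sum>x1\<in>reps n. ?F x2 (x1 - x2))"
    unfolding sol_count_def B by (rule sum.swap)
  moreover have "sol_count n shifted_form \<rho> = (\<Sum>x2\<in>reps n. \<Sum>a\<in>reps n. ?F x2 a)"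
    unfolding sol_count_def by (rule sum.swap)
  ultimately show ?thesis
    by simp
qed

lemma Xl_shifted_form:
  "Xl val q (\<lambda>x1 x2. x1 ^ 2 - (1 + 4 * u) * x2 ^ 2) \<rho> l
     = real (sol_count (Suc l) shifted_form \<rho>) / real q ^ (2 * (l + 1))"
  using Xl_diagonal_form[of "1 + 4 * u"] u_integral
  by (simp add: sol_count_diagonal_eq_shifted integral_intros)

lemma q_power_divide: "real q ^ a / real q ^ (a + b) = 1 / real q ^ b"
  using two_le_q by (simp add: power_add)

lemma Xl_one: "Xl val q (\<lambda>x1 x2. x1 ^ 2 - (1 + 4 * u) * x2 ^ 2) 1 l = 1 / real q ^ (l + 1)"
  using sol_count_shifted_form_unit[OF integral_one not_dvd2_one, of l] q_power_divide[of "l + 1" "l + 1"]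
  by (simp add: Xl_shifted_form mult_2)

lemma Xl_four_square:
  assumes "t \<noteq> 0" "val t = int T"
  shows "Xl val q (\<lambda>x1 x2. x1 ^ 2 - (1 + 4 * u) * x2 ^ 2) (4 * t ^ 2) l
     = (if l < 2 * T + 2 then 1 / real q ^ (2 * (l div 2) + 1) else (real q + 1) / real q ^ (l + 1))"
proof -
  obtain s where s: "s \<in> \<O>" "\<not> dvd2 1 s" and t: "4 * t ^ 2 = 4 ^ Suc T * s" "4 * t ^ 2 = 2 ^ (2 * T + 2) * s"
    using four_square_decompose[OF assms] by blast
  show ?thesis
  proof (cases "l < 2 * T + 2")
    case True
    have "dvd2 (2 * T + 2) (4 * t ^ 2 - 0)"
      unfolding t(2) diff_zero by (rule dvd2_two_power_mult[OF s(1)])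
    then have "sol_count (Suc l) shifted_form (4 * t ^ 2) = q ^ (l + 1 + l mod 2)"
      using True dvd2_mono sol_count_cong sol_count_shifted_form_zero by (metis Suc_leI)
    moreover have "2 * (l + 1) = (l + 1 + l mod 2) + (2 * (l div 2) + 1)"
      by simp
    ultimately have "Xl val q (\<lambda>x1 x2. x1 ^ 2 - (1 + 4 * u) * x2 ^ 2) (4 * t ^ 2) l
        = real q ^ (l + 1 + l mod 2) / real q ^ ((l + 1 + l mod 2) + (2 * (l div 2) + 1))"
      unfolding Xl_shifted_form by (simp only: of_nat_power)
    then show ?thesis
      using True by (simp only: q_power_divide if_True)
  next
    case False
    then have "sol_count (Suc l) shifted_form (4 * t ^ 2) = q ^ (l + 1) * (q + 1)"
      unfolding t(1) using sol_count_shifted_form_four_power_unit[OF s] by simp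
    then have "Xl val q (\<lambda>x1 x2. x1 ^ 2 - (1 + 4 * u) * x2 ^ 2) (4 * t ^ 2) l
        = (real q ^ (l + 1) * (real q + 1)) / (real q ^ (l + 1) * real q ^ (l + 1))"
      by (simp only: Xl_shifted_form of_nat_mult of_nat_power of_nat_add of_nat_1 mult_2 power_add)
    also have "\<dots> = (real q + 1) / real q ^ (l + 1)"
      using two_le_q by (intro nonzero_mult_divide_mult_cancel_left) simp
    finally show ?thesis
      using False by simp
  qed
qed

end

section \<open>The generating series\<close>

lemma sums_geometric_scaled:
  fixes z w :: complex and Q :: real
  assumes "Q \<noteq> 0" "norm w < 1" "w = z / of_real Q"
  shows "(\<lambda>l. z ^ l * of_real (1 / Q ^ (l + 1))) sums (of_real (1 / Q) / (1 - w))"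
proof -
  have z: "z = of_real Q * w"
    using assms(1,3) by simp
  have "z ^ l * of_real (1 / Q ^ (l + 1)) = of_real (1 / Q) * w ^ l" for l
    using assms(1) by (simp add: z field_simps)
  moreover have "(\<lambda>l. of_real (1 / Q) * w ^ l) sums (of_real (1 / Q) * (1 / (1 - w)))"
    by (rule sums_mult[OF geometric_sums[OF assms(2)]])
  ultimately show ?thesis
    by simp
qed

lemma sum_pairs_geometric:
  fixes w c :: "'a::field"
  assumes "w ^ 2 \<noteq> 1" and pair: "\<And>k. k < n \<Longrightarrow> f (2 * k) + f (2 * k + 1) = c * (w ^ 2) ^ k"
  shows "(\<Sum>i<2 * n. f i) = c * ((1 - w ^ (2 * n)) / (1 - w ^ 2))"
proof -
  have "(\<Sum>i<2 * n. f i) = (\<Sum>k<n. f (2 * k) + f (2 * k + 1))"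
    by (induction n) (simp_all add: algebra_simps)
  also have "\<dots> = c * (\<Sum>k<n. (w ^ 2) ^ k)"
    using pair by (simp add: sum_distrib_left)
  also have "(\<Sum>k<n. (w ^ 2) ^ k) = (1 - (w ^ 2) ^ n) / (1 - w ^ 2)"
    using assms(1) unfolding sum_gp_strict by simp
  finally show ?thesis
    by (simp only: power_mult)
qed

text \<open>The first \<open>2T + 2\<close> terms pair up into a geometric progression in \<open>w\<^sup>2\<close>, the rest is a
  geometric tail in w.\<close>

lemma sums_two_phase:
  fixes z w :: complex and Q :: real and T :: nat
  assumes Q: "Q \<noteq> 0" and w: "norm w < 1" "w = z / of_real Q"
  shows "(\<lambda>l. z ^ l * of_real (if l < 2 * T + 2 then 1 / Q ^ (2 * (l div 2) + 1) else (Q + 1) / Q ^ (l + 1)))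
           sums (of_real (1 / Q) * (1 + z + w ^ (2 * T) * (z * w + w ^ 3)) / (1 - w ^ 2))"
    (is "?f sums _")
proof -
  let ?Q = "of_real Q :: complex"
  let ?N = "2 * T + 2"
  have Qn: "?Q \<noteq> 0"
    using Q by simp
  have z: "z = ?Q * w"
    using w(2) Qn by simp
  have w1: "1 - w \<noteq> 0" "1 + w \<noteq> 0"
    using w(1) by (auto simp: add_eq_0_iff)
  have "?f (i + ?N) = (?Q + 1) / ?Q * w ^ ?N * w ^ i" for i
    using Qn by (simp add: z power_add field_simps)
  moreover have "(\<lambda>i. (?Q + 1) / ?Q * w ^ ?N * w ^ i) sums ((?Q + 1) / ?Q * w ^ ?N * (1 / (1 - w)))"
    by (rule sums_mult[OF geometric_sums[OF w(1)]])
  ultimately have "(\<lambda>i. ?f (i + ?N)) sums ((?Q + 1) / ?Q * w ^ ?N * (1 / (1 - w)))"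
    by simp
  then have tail: "?f sums ((?Q + 1) / ?Q * w ^ ?N * (1 / (1 - w)) + (\<Sum>i<?N. ?f i))"
    by (rule sums_iff_shift[THEN iffD1])
  have pair: "?f (2 * k) + ?f (2 * k + 1) = (1 + z) / ?Q * (w ^ 2) ^ k" if "k < T + 1" for k
  proof -
    have "?f (2 * k) + ?f (2 * k + 1) = (z ^ (2 * k) + z ^ (2 * k + 1)) / ?Q ^ (2 * k + 1)"
      using that by (simp add: add_divide_distrib)
    also have "\<dots> = (1 + z) / ?Q * (w ^ 2) ^ k"
      using Qn by (simp add: z power_mult[symmetric] field_simps)
    finally show ?thesis .
  qed
  have fac: "1 - w ^ 2 = (1 - w) * (1 + w)"
    by (simp add: power2_eq_square algebra_simps)
  then have "w ^ 2 \<noteq> 1"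
    using w1 by auto
  moreover have "2 * (T + 1) = ?N"
    by simp
  ultimately have head: "(\<Sum>i<?N. ?f i) = (1 + z) / ?Q * ((1 - w ^ ?N) / ((1 - w) * (1 + w)))"
    using sum_pairs_geometric[where n = "T + 1", OF _ pair] unfolding fac by metis
  let ?W = "w ^ (2 * T)"
  let ?D = "?Q * ((1 - w) * (1 + w))"
  have "(?Q + 1) / ?Q * w ^ ?N * (1 / (1 - w)) = ((?Q + 1) * (?W * (w * w)) * (1 + w)) / ?D"
    using Qn w1 by (simp add: power_add power2_eq_square divide_simps)
  moreover have "(1 + z) / ?Q * ((1 - w ^ ?N) / ((1 - w) * (1 + w))) = ((1 + ?Q * w) * (1 - ?W * (w * w))) / ?D"
    by (simp add: z power_add power2_eq_square)
  moreover have "(?Q + 1) * (?W * (w * w)) * (1 + w) + (1 + ?Q * w) * (1 - ?W * (w * w))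
      = 1 + z + ?W * (z * w + w ^ 3)"
    by (simp add: z power3_eq_cube algebra_simps)
  moreover have "(1 + z + ?W * (z * w + w ^ 3)) / ?D = of_real (1 / Q) * (1 + z + ?W * (z * w + w ^ 3)) / (1 - w ^ 2)"
    by (simp add: fac divide_divide_eq_left mult.commute)
  ultimately have "(?Q + 1) / ?Q * w ^ ?N * (1 / (1 - w)) + (1 + z) / ?Q * ((1 - w ^ ?N) / ((1 - w) * (1 + w)))
      = of_real (1 / Q) * (1 + z + ?W * (z * w + w ^ 3)) / (1 - w ^ 2)"
    by (simp only: add_divide_distrib[symmetric])
  then show ?thesis
    using tail unfolding head by simp
qed

theorem proposition6p5:
  fixes val :: "'k::field \<Rightarrow> int" and q :: nat and \<Delta> u t :: 'k and T :: nat and \<beta> :: complex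
  assumes "unram2_local_field val q"
    and "u \<noteq> 0" and "val u = 0" and "\<Delta> = 1 + 4 * u"
    and "quad_defect val \<Delta> = ideal_of val 4"
    and "t \<in> intg val" and "t \<noteq> 0" and "val t = int T"
    and "0 < Re \<beta>"
  defines "z \<equiv> (of_nat q :: complex) powr (- \<beta>)"
    and "w \<equiv> (of_nat q :: complex) powr (- \<beta>) / of_nat q"
    and "B \<equiv> (\<lambda>x1 x2. x1 ^ 2 - \<Delta> * x2 ^ 2)"
  shows "(\<lambda>l. z ^ l * of_real (Xl val q B 1 l)) sums (of_real (1 / real q) / (1 - w)) \<and>
         (\<lambda>l. z ^ l * of_real (Xl val q B (4 * t ^ 2) l)) sums
           (of_real (1 / real q) * (1 + z + w ^ (2 * T) * (z * w + w ^ 3)) / (1 - w ^ 2))"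
proof -
  have valuation: "dyadic_valuation val q"
    using assms(1) by (rule dyadic_valuation_if_unram2_local_field)
  have u: "u \<in> intg val"
    using assms(3) by (simp add: intg_def)
  interpret dyadic_norm_form val q u
    using valuation u dyadic_valuation.residue_irreducible_if_quad_defect[OF valuation u] assms(4,5)
    by (simp add: dyadic_norm_form_def dyadic_norm_form_axioms_def)
  have q: "real q \<noteq> 0" "w = z / of_real (real q)"
    using two_le_q by (simp_all add: w_def z_def)
  have "norm z = real q powr (- Re \<beta>)"
    unfolding z_def by (subst norm_powr_real_powr) auto
  also have "\<dots> \<le> real q powr 0"
    using two_le_q assms(9) by (intro powr_mono) auto
  finally have "norm z \<le> 1"
    using two_le_q by simp
  then have "norm w < 1"
    using two_le_q by (simp add: q(2) norm_divide divide_le_eq_1 le_less_trans[of _ 1])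
  then show ?thesis
    unfolding B_def assms(4) Xl_one Xl_four_square[OF assms(7,8)]
    using sums_geometric_scaled sums_two_phase q by blast
qed

end
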